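(* Let $\mathcal M=\{A,B,C,D\}$ be a minimal realization of a discrete-time passive system and let $X\in\mathbb X^{>}(\mathcal M)$. Then there is a unique maximal real number $\xi^*(X)$ such that the matrix inequality $$\widetilde W(X,\mathcal M)\ \ge\ \xi\,\operatorname{diag}(X,X,2I_m)$$ holds for $\xi=\xi^*(X)$, and $\xi^*(X)<1$. Moreover, writing $X=T^{\mathsf H}T$ with $T$ nonsingular, $\xi^*(X)=\lambda_{\min}\big(D_s\widetilde W(I_n,\mathcal M_T)D_s\big)$.
   Context: A discrete-time model is $\mathcal M=\{A,B,C,D\}$ with $A\in\mathbb C^{n\times n}$, $B\in\mathbb C^{n\times m}$, $C\in\mathbb C^{m\times n}$, $D\in\mathbb C^{m\times m}$ (system $x_{k+1}=Ax_k+Bu_k$, $y_k=Cx_k+Du_k$), with transfer function $\mathcal T(z)=C(zI_n-A)^{-1}B+D$. It is minimal if $\operatorname{rank}[zI_n-A\ \ B]=n$ and $\operatorname{rank}[zI_n-A^{\mathsf H}\ \ C^{\mathsf H}]=n$ for all $z\in\mathbb C$. The system is passive if $\mathcal T(e^{\imath\omega})^{\mathsf H}+\mathcal T(e^{\imath\omega})\ge0$ for all $\omega\in[-\pi,\pi]$ and all eigenvalues of $A$ lie in the closed unit disc with those on the unit circle semisimple. $\mathbb H_n$ is the set of $n\times n$ Hermitian matrices. For $X\in\mathbb H_n$, $$W(X,\mathcal M)=\begin{bmatrix} X-A^{\mathsf H}XA & C^{\mathsf H}-A^{\mathsf H}XB\\ C-B^{\mathsf H}XA & D^{\mathsf H}+D-B^{\mathsf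 H}XB\end{bmatrix},\qquad \widetilde W(X,\mathcal M)=\begin{bmatrix} X & XA & XB\\ A^{\mathsf H}X & X & C^{\mathsf H}\\ B^{\mathsf H}X & C & D^{\mathsf H}+D\end{bmatrix},$$ and $\mathbb X^{>}(\mathcal M)=\{X\in\mathbb H_n: W(X,\mathcal M)\ge0,\ X>0\}$. $D_s=\operatorname{diag}(I_n,I_n,I_m/\sqrt2)$; for nonsingular $T$, $\mathcal M_T=\{TAT^{-1},TB,CT^{-1},D\}$. *)

theory Defs
  imports Complex_Main "Jordan_Normal_Form.Jordan_Normal_Form" "Jordan_Normal_Form.DL_Rank" "Jordan_Normal_Form.Matrix_Kernel"
    "Jordan_Normal_Form.Gauss_Jordan_Elimination"
begin

definition adj :: "complex mat \<Rightarrow> complex mat" where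
  "adj M = mat (dim_col M) (dim_row M) (\<lambda>(i,j). cnj (M $$ (j,i)))"

definition hcat :: "complex mat \<Rightarrow> complex mat \<Rightarrow> complex mat" where
  "hcat P Q = mat (dim_row P) (dim_col P + dim_col Q)
     (\<lambda>(i,j). if j < dim_col P then P $$ (i,j) else Q $$ (i, j - dim_col P))"

definition blk3 :: "complex mat \<Rightarrow> complex mat \<Rightarrow> complex mat \<Rightarrow> complex mat \<Rightarrow> complex mat
   \<Rightarrow> complex mat \<Rightarrow> complex mat \<Rightarrow> complex mat \<Rightarrow> complex mat \<Rightarrow> complex mat" where
  "blk3 M11 M12 M13 M21 M22 M23 M31 M32 M33 =
     four_block_mat (four_block_mat M11 M12 M21 M22) (M13 @\<^sub>r M23) (hcat M31 M32) M33"

definition hermitian :: "complex mat \<Rightarrow> bool" where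
  "hermitian M \<longleftrightarrow> M \<in> carrier_mat (dim_row M) (dim_row M) \<and> adj M = M"

definition psd :: "complex mat \<Rightarrow> bool" where
  "psd M \<longleftrightarrow> hermitian M \<and>
     (\<forall>v \<in> carrier_vec (dim_row M). Re (conjugate v \<bullet> (M *\<^sub>v v)) \<ge> 0)"

definition pd :: "complex mat \<Rightarrow> bool" where
  "pd M \<longleftrightarrow> hermitian M \<and>
     (\<forall>v \<in> carrier_vec (dim_row M). v \<noteq> 0\<^sub>v (dim_row M) \<longrightarrow> Re (conjugate v \<bullet> (M *\<^sub>v v)) > 0)"

definition loewner_ge :: "complex mat \<Rightarrow> complex mat \<Rightarrow> bool" where
  "loewner_ge M N \<longleftrightarrow> psd (M - N)"

(* smallest eigenvalue of a Hermitian matrix (its eigenvalues are real) *)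
definition lambda_min :: "complex mat \<Rightarrow> real" where
  "lambda_min M = Min {x::real. eigenvalue M (complex_of_real x)}"

definition minv :: "complex mat \<Rightarrow> complex mat" where
  "minv M = the (mat_inverse M)"

definition transfer :: "complex mat \<Rightarrow> complex mat \<Rightarrow> complex mat \<Rightarrow> complex mat \<Rightarrow> complex \<Rightarrow> complex mat" where
  "transfer A B C D z = C * minv (z \<cdot>\<^sub>m 1\<^sub>m (dim_row A) - A) * B + D"

definition semisimple_eig :: "complex mat \<Rightarrow> complex \<Rightarrow> bool" where
  "semisimple_eig A ev \<longleftrightarrow> Polynomial.order ev (char_poly A) = kernel_dim (char_matrix A ev)"

definition minimal_sys :: "complex mat \<Rightarrow> complex mat \<Rightarrow> complex mat \<Rightarrow> complex mat \<Rightarrow> bool" where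
  "minimal_sys A B C D \<longleftrightarrow>
     (\<forall>z::complex.
        vec_space.rank (dim_row A) (hcat (z \<cdot>\<^sub>m 1\<^sub>m (dim_row A) - A) B) = dim_row A \<and>
        vec_space.rank (dim_row A) (hcat (z \<cdot>\<^sub>m 1\<^sub>m (dim_row A) - adj A) (adj C)) = dim_row A)"

definition passive_sys :: "complex mat \<Rightarrow> complex mat \<Rightarrow> complex mat \<Rightarrow> complex mat \<Rightarrow> bool" where
  "passive_sys A B C D \<longleftrightarrow>
     (\<forall>\<omega>::real. -pi \<le> \<omega> \<and> \<omega> \<le> pi \<and> \<not> eigenvalue A (cis \<omega>) \<longrightarrow>
        psd (adj (transfer A B C D (cis \<omega>)) + transfer A B C D (cis \<omega>))) \<and>
     (\<forall>ev. eigenvalue A ev \<longrightarrow> cmod ev \<le> 1 \<and> (cmod ev = 1 \<longrightarrow> semisimple_eig A ev))"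

definition Wmat :: "complex mat \<Rightarrow> complex mat \<Rightarrow> complex mat \<Rightarrow> complex mat \<Rightarrow> complex mat \<Rightarrow> complex mat" where
  "Wmat X A B C D = four_block_mat
     (X - adj A * X * A) (adj C - adj A * X * B)
     (C - adj B * X * A) (adj D + D - adj B * X * B)"

definition Wtilde :: "complex mat \<Rightarrow> complex mat \<Rightarrow> complex mat \<Rightarrow> complex mat \<Rightarrow> complex mat \<Rightarrow> complex mat" where
  "Wtilde X A B C D = blk3
     X (X * A) (X * B)
     (adj A * X) X (adj C)
     (adj B * X) C (adj D + D)"

definition Xpos :: "complex mat \<Rightarrow> complex mat \<Rightarrow> complex mat \<Rightarrow> complex mat \<Rightarrow> complex mat set" where
  "Xpos A B C D = {X. X \<in> carrier_mat (dim_row A) (dim_row A) \<and> hermitian X \<and>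
                      psd (Wmat X A B C D) \<and> pd X}"

definition diagXX2 :: "complex mat \<Rightarrow> nat \<Rightarrow> complex mat" where
  "diagXX2 X m = blk3 X (0\<^sub>m (dim_row X) (dim_row X)) (0\<^sub>m (dim_row X) m)
                      (0\<^sub>m (dim_row X) (dim_row X)) X (0\<^sub>m (dim_row X) m)
                      (0\<^sub>m m (dim_row X)) (0\<^sub>m m (dim_row X)) (2 \<cdot>\<^sub>m 1\<^sub>m m)"

definition Ds :: "nat \<Rightarrow> nat \<Rightarrow> complex mat" where
  "Ds n m = blk3 (1\<^sub>m n) (0\<^sub>m n n) (0\<^sub>m n m)
                 (0\<^sub>m n n) (1\<^sub>m n) (0\<^sub>m n m)
                 (0\<^sub>m m n) (0\<^sub>m m n) (complex_of_real (1 / sqrt 2) \<cdot>\<^sub>m 1\<^sub>m m)"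

definition xi_set :: "complex mat \<Rightarrow> complex mat \<Rightarrow> complex mat \<Rightarrow> complex mat \<Rightarrow> complex mat \<Rightarrow> real set" where
  "xi_set X A B C D = {\<xi>. loewner_ge (Wtilde X A B C D) (complex_of_real \<xi> \<cdot>\<^sub>m diagXX2 X (dim_row D))}"

end

(*
  Write X = T\<^sup>H T with T nonsingular (Cholesky). Congruence by R = diag(T, T, \<surd>2 I) gives
  W~(X, M) = R\<^sup>H (D\<^sub>s W~(I, M\<^sub>T) D\<^sub>s) R and diag(X, X, 2 I) = R\<^sup>H R, so
  W~(X, M) \<ge> \<xi> diag(X, X, 2 I) holds exactly when D\<^sub>s W~(I, M\<^sub>T) D\<^sub>s - \<xi> I \<ge> 0, i.e. when \<xi> is at
  most the smallest eigenvalue of this Hermitian matrix. Hence the admissible \<xi> form the ray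
  up to \<lambda>\<^sub>m\<^sub>i\<^sub>n, independently of the choice of T.

  If \<xi> = 1 were admissible, W~(X, M) - diag(X, X, 2 I) would be positive semidefinite with zero
  upper left block, which forces the blocks X A and X B to vanish; as X is nonsingular,
  A = 0 and B = 0, and then rank [z I - A, B] = 0 at z = 0 contradicts minimality.
*)

theory Submission
  imports Defs
begin

section \<open>Conjugate transpose, inverses and quadratic forms\<close>

lemma adj_carrier [simp]: "M \<in> carrier_mat a b \<Longrightarrow> adj M \<in> carrier_mat b a"
  unfolding adj_def by auto

lemma adj_dim [simp]: "dim_row (adj M) = dim_col M" "dim_col (adj M) = dim_row M"
  unfolding adj_def by auto

lemma adj_index [simp]: "i < dim_col M \<Longrightarrow> j < dim_row M \<Longrightarrow> adj M $$ (i, j) = cnj (M $$ (j, i))"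
  unfolding adj_def by auto

lemma adj_adj [simp]: "adj (adj M) = M"
  by (rule eq_matI) auto

lemma adj_one [simp]: "adj (1\<^sub>m n) = 1\<^sub>m n"
  by (rule eq_matI) auto

lemma adj_zero [simp]: "adj (0\<^sub>m a b) = 0\<^sub>m b a"
  by (rule eq_matI) auto

lemma adj_smult: "adj (c \<cdot>\<^sub>m M) = cnj c \<cdot>\<^sub>m adj M"
  by (rule eq_matI) auto

lemma adj_add: "M \<in> carrier_mat a b \<Longrightarrow> N \<in> carrier_mat a b \<Longrightarrow> adj (M + N) = adj M + adj N"
  by (rule eq_matI) auto

lemma adj_minus: "M \<in> carrier_mat a b \<Longrightarrow> N \<in> carrier_mat a b \<Longrightarrow> adj (M - N) = adj M - adj N"
  by (rule eq_matI) auto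

lemma adj_mult:
  assumes "M \<in> carrier_mat a b" "N \<in> carrier_mat b c"
  shows "adj (M * N) = adj N * adj M"
proof (rule eq_matI)
  fix i j assume "i < dim_row (adj N * adj M)" "j < dim_col (adj N * adj M)"
  then have i: "i < c" and j: "j < a" using assms by auto
  have "adj (M * N) $$ (i, j) = cnj (\<Sum>k = 0..<b. M $$ (j, k) * N $$ (k, i))"
    using assms i j by (simp add: scalar_prod_def)
  also have "\<dots> = (\<Sum>k = 0..<b. cnj (N $$ (k, i)) * cnj (M $$ (j, k)))"
    by (simp add: mult.commute)
  also have "\<dots> = (adj N * adj M) $$ (i, j)"
    using assms i j by (simp add: scalar_prod_def)
  finally show "adj (M * N) $$ (i, j) = (adj N * adj M) $$ (i, j)" .
qed (use assms in auto)

lemma adj_four_block_mat: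
  assumes "M1 \<in> carrier_mat a c" "M2 \<in> carrier_mat a d" "M3 \<in> carrier_mat b c" "M4 \<in> carrier_mat b d"
  shows "adj (four_block_mat M1 M2 M3 M4) = four_block_mat (adj M1) (adj M3) (adj M2) (adj M4)"
  by (rule eq_matI) (use assms in auto)

lemma scalar_prod_adj:
  assumes S: "S \<in> carrier_mat n n" and v: "v \<in> carrier_vec n" and w: "w \<in> carrier_vec n"
  shows "conjugate v \<bullet> (adj S *\<^sub>v w) = conjugate (S *\<^sub>v v) \<bullet> w"
proof -
  have "conjugate v \<bullet> (adj S *\<^sub>v w) = (\<Sum>i = 0..<n. \<Sum>k = 0..<n. cnj (v $ i) * cnj (S $$ (k, i)) * w $ k)"
    using S v w by (simp add: scalar_prod_def sum_distrib_left mult.assoc)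
  also have "\<dots> = (\<Sum>k = 0..<n. (\<Sum>i = 0..<n. cnj (v $ i) * cnj (S $$ (k, i))) * w $ k)"
    by (subst sum.swap) (simp add: sum_distrib_right)
  also have "\<dots> = conjugate (S *\<^sub>v v) \<bullet> w"
    using S v w by (simp add: scalar_prod_def mult.commute)
  finally show ?thesis .
qed

definition sq_norm :: "complex vec \<Rightarrow> real" where
  "sq_norm v = (\<Sum>i < dim_vec v. (cmod (v $ i))\<^sup>2)"

definition qform :: "complex mat \<Rightarrow> complex vec \<Rightarrow> complex" where
  "qform P v = conjugate v \<bullet> (P *\<^sub>v v)"

lemma sq_norm_nonneg: "0 \<le> sq_norm v"
  unfolding sq_norm_def by (auto intro: sum_nonneg)

lemma conjugate_scalar_prod_self: "conjugate v \<bullet> v = complex_of_real (sq_norm v)"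
proof -
  have "conjugate v \<bullet> v = (\<Sum>i = 0..<dim_vec v. complex_of_real ((cmod (v $ i))\<^sup>2))"
    unfolding scalar_prod_def
    by (rule sum.cong) (auto simp: complex_norm_square[symmetric] mult.commute)
  then show ?thesis
    unfolding sq_norm_def by (simp add: lessThan_atLeast0)
qed

lemma sq_norm_eq_0_iff:
  assumes "v \<in> carrier_vec n"
  shows "sq_norm v = 0 \<longleftrightarrow> v = 0\<^sub>v n"
proof
  assume "sq_norm v = 0"
  then have "\<forall>i < dim_vec v. (cmod (v $ i))\<^sup>2 = 0"
    unfolding sq_norm_def by (subst (asm) sum_nonneg_eq_0_iff) auto
  then show "v = 0\<^sub>v n" using assms by (intro eq_vecI) auto
qed (auto simp: sq_norm_def)

lemma sq_norm_pos: "v \<in> carrier_vec n \<Longrightarrow> v \<noteq> 0\<^sub>v n \<Longrightarrow> 0 < sq_norm v"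
  using sq_norm_eq_0_iff sq_norm_nonneg by (metis less_eq_real_def)

lemma sq_norm_unit_vec:
  assumes "i < n"
  shows "sq_norm (unit_vec n i) = 1"
proof -
  have "sq_norm (unit_vec n i) = (\<Sum>k<n. if k = i then 1 else 0)"
    unfolding sq_norm_def by (rule sum.cong) (auto simp: unit_vec_def)
  then show ?thesis using assms by simp
qed

lemma cmod_le_sqrt_sq_norm: "j < dim_vec u \<Longrightarrow> cmod (u $ j) \<le> sqrt (sq_norm u)"
  unfolding sq_norm_def
  by (rule real_le_rsqrt, rule member_le_sum[of j "{..<dim_vec u}" "\<lambda>i. (cmod (u $ i))\<^sup>2"]) auto

lemma qform_congruence:
  assumes S: "S \<in> carrier_mat n n" and P: "P \<in> carrier_mat n n" and v: "v \<in> carrier_vec n"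
  shows "qform (adj S * P * S) v = qform P (S *\<^sub>v v)"
proof -
  have "(adj S * P * S) *\<^sub>v v = (adj S * P) *\<^sub>v (S *\<^sub>v v)"
    by (rule assoc_mult_mat_vec[of _ n n]) (use S P v in auto)
  also have "\<dots> = adj S *\<^sub>v (P *\<^sub>v (S *\<^sub>v v))"
    by (rule assoc_mult_mat_vec[of _ n n]) (use S P v in auto)
  finally have "(adj S * P * S) *\<^sub>v v = adj S *\<^sub>v (P *\<^sub>v (S *\<^sub>v v))" .
  then show ?thesis
    unfolding qform_def using scalar_prod_adj[OF S v, of "P *\<^sub>v (S *\<^sub>v v)"] S P v by simp
qed

lemma qform_gram:
  assumes T: "T \<in> carrier_mat n n" and v: "v \<in> carrier_vec n"
  shows "qform (adj T * T) v = complex_of_real (sq_norm (T *\<^sub>v v))"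
  using qform_congruence[OF T _ v, of "1\<^sub>m n"] T v
  by (simp add: qform_def conjugate_scalar_prod_self)

lemma smult_mat_mult_vec:
  "A \<in> carrier_mat k l \<Longrightarrow> v \<in> carrier_vec l \<Longrightarrow> (c \<cdot>\<^sub>m A) *\<^sub>v v = c \<cdot>\<^sub>v (A *\<^sub>v (v :: complex vec))"
  by (rule eq_vecI) (auto simp: scalar_prod_def sum_distrib_left mult.assoc)

lemma smult_one_mult_vec: "v \<in> carrier_vec n \<Longrightarrow> (c \<cdot>\<^sub>m 1\<^sub>m n) *\<^sub>v v = c \<cdot>\<^sub>v (v :: complex vec)"
  by (simp add: smult_mat_mult_vec[of "1\<^sub>m n" n n])

lemma qform_shift:
  assumes "M \<in> carrier_mat n n" "v \<in> carrier_vec n"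
  shows "qform (M - c \<cdot>\<^sub>m 1\<^sub>m n) v = qform M v - c * complex_of_real (sq_norm v)"
  using assms
  by (simp add: qform_def minus_mult_distrib_mat_vec[of _ n n] smult_one_mult_vec
      scalar_prod_minus_distrib[of _ n] conjugate_scalar_prod_self[symmetric])

lemma one_smult_mat [simp]: "1 \<cdot>\<^sub>m A = (A :: complex mat)"
  by (rule eq_matI) auto

lemma smult_smult_mat: "a \<cdot>\<^sub>m (b \<cdot>\<^sub>m A) = (a * b) \<cdot>\<^sub>m (A :: complex mat)"
  by (rule eq_matI) auto

lemma smult_one_mult_mat: "A \<in> carrier_mat k l \<Longrightarrow> (c \<cdot>\<^sub>m 1\<^sub>m k) * A = c \<cdot>\<^sub>m (A :: complex mat)"
  by (simp add: mult_smult_assoc_mat[of _ k k])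

lemma det_nonzero_minv:
  assumes T: "T \<in> carrier_mat n n" and d: "det T \<noteq> (0 :: complex)"
  shows "minv T \<in> carrier_mat n n" "T * minv T = 1\<^sub>m n" "minv T * T = 1\<^sub>m n"
proof -
  have "T \<in> Units (ring_mat TYPE(complex) n ())" by (rule det_non_zero_imp_unit[OF T d])
  then obtain K where "mat_inverse T = Some K"
    using mat_inverse(1)[OF T] by fastforce
  then show "minv T \<in> carrier_mat n n" "T * minv T = 1\<^sub>m n" "minv T * T = 1\<^sub>m n"
    using mat_inverse(2)[OF T] unfolding minv_def by auto
qed

lemma invertible_mat_det_nonzero:
  assumes T: "T \<in> carrier_mat n n" and "invertible_mat T"
  shows "det T \<noteq> (0 :: complex)"
proof
  obtain K where TK: "T * K = 1\<^sub>m n" and KT: "K * T = 1\<^sub>m (dim_row K)"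
    using assms unfolding invertible_mat_def inverts_mat_def by auto
  then have K: "K \<in> carrier_mat n n"
    using T by (metis carrier_matD carrier_matI index_mult_mat(2,3) index_one_mat(2,3))
  assume "det T = 0"
  then have "det (T * K) = 0" using det_mult[OF T K] by simp
  then show False using TK by simp
qed

lemma mult_square_carrier_mat [simp]:
  "A \<in> carrier_mat n n \<Longrightarrow> B \<in> carrier_mat n n \<Longrightarrow> A * B \<in> carrier_mat n n"
  by auto

section \<open>Positive semidefinite matrices\<close>

lemma psdD: "psd P \<Longrightarrow> P \<in> carrier_mat n n \<Longrightarrow> v \<in> carrier_vec n \<Longrightarrow> 0 \<le> Re (qform P v)"
  unfolding psd_def qform_def by auto

lemma psdI:
  "P \<in> carrier_mat n n \<Longrightarrow> adj P = P \<Longrightarrow> (\<And>v. v \<in> carrier_vec n \<Longrightarrow> 0 \<le> Re (qform P v)) \<Longrightarrow> psd P"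
  unfolding psd_def qform_def hermitian_def by auto

lemma psd_adj: "psd P \<Longrightarrow> adj P = P"
  unfolding psd_def hermitian_def by auto

lemma psd_congruence:
  assumes "psd P" "P \<in> carrier_mat n n" "S \<in> carrier_mat n n"
  shows "psd (adj S * P * S)"
proof (rule psdI)
  show "adj S * P * S \<in> carrier_mat n n" using assms by auto
  show "adj (adj S * P * S) = adj S * P * S"
    using assms psd_adj[OF assms(1)] by (simp add: adj_mult[of _ n n _ n] assoc_mult_mat[of _ n n _ n _ n])
  show "0 \<le> Re (qform (adj S * P * S) v)" if "v \<in> carrier_vec n" for v
    using that assms qform_congruence psdD by auto
qed

lemma psd_congruence_iff:
  assumes P: "P \<in> carrier_mat n n" and S: "S \<in> carrier_mat n n"
    and K: "K \<in> carrier_mat n n" and SK: "S * K = 1\<^sub>m n"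
  shows "psd (adj S * P * S) \<longleftrightarrow> psd P"
proof
  assume "psd (adj S * P * S)"
  then have "psd (adj K * (adj S * P * S) * K)"
    by (rule psd_congruence[OF _ _ K]) (use P S in auto)
  also have "adj K * (adj S * P * S) * K = adj (S * K) * P * (S * K)"
    using P S K by (simp add: adj_mult[of _ n n _ n] assoc_mult_mat[of _ n n _ n _ n])
  finally show "psd P" using SK P by simp
qed (use psd_congruence P S in auto)

lemma qform_add_smult:
  assumes P: "P \<in> carrier_mat n n" "adj P = P" and v: "v \<in> carrier_vec n" and w: "w \<in> carrier_vec n"
  shows "qform P (v + s \<cdot>\<^sub>v w) = qform P v + cnj s * (conjugate w \<bullet> (P *\<^sub>v v))
           + s * cnj (conjugate w \<bullet> (P *\<^sub>v v)) + cnj s * s * qform P w"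
proof -
  have herm: "conjugate v \<bullet> (P *\<^sub>v w) = cnj (conjugate w \<bullet> (P *\<^sub>v v))"
    using scalar_prod_adj[OF P(1) v w] P v w by (simp add: scalar_prod_def mult.commute)
  have "qform P (v + s \<cdot>\<^sub>v w) = (conjugate v + cnj s \<cdot>\<^sub>v conjugate w) \<bullet> (P *\<^sub>v v + s \<cdot>\<^sub>v (P *\<^sub>v w))"
    unfolding qform_def using P v w
    by (simp add: conjugate_add_vec[of _ n] conjugate_smult_vec mult_add_distrib_mat_vec[of _ n n]
        mult_mat_vec[of _ n n])
  also have "\<dots> = conjugate v \<bullet> (P *\<^sub>v v) + s * (conjugate v \<bullet> (P *\<^sub>v w))
      + cnj s * (conjugate w \<bullet> (P *\<^sub>v v)) + cnj s * s * (conjugate w \<bullet> (P *\<^sub>v w))"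
    using P v w
    by (simp add: add_scalar_prod_distrib[of _ n] scalar_prod_add_distrib[of _ n] algebra_simps)
  finally show ?thesis unfolding herm qform_def by (simp add: algebra_simps)
qed

text \<open>If \<open>v\<^sup>H P v = 0\<close> for \<open>P \<ge> 0\<close>, then testing \<open>P \<ge> 0\<close> at \<open>v - t P v\<close> gives
  \<open>2 t |P v|\<^sup>2 \<le> t\<^sup>2 (P v)\<^sup>H P (P v)\<close> for all \<open>t > 0\<close>, which forces \<open>P v = 0\<close>.\<close>

lemma psd_qform_eq_0_imp_kernel:
  assumes psd: "psd P" and P: "P \<in> carrier_mat n n" and v: "v \<in> carrier_vec n"
    and q0: "Re (qform P v) = 0"
  shows "P *\<^sub>v v = 0\<^sub>v n"
proof -
  define w where "w = P *\<^sub>v v"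
  have w: "w \<in> carrier_vec n" using P v unfolding w_def by auto
  define q where "q = Re (qform P w)"
  have q: "0 \<le> q" unfolding q_def using psdD[OF psd P w] .
  have key: "2 * t * sq_norm w \<le> t * t * q" if t: "t > 0" for t :: real
  proof -
    have "0 \<le> Re (qform P (v + complex_of_real (-t) \<cdot>\<^sub>v w))"
      using psdD[OF psd P] v w by auto
    also have "\<dots> = - 2 * t * sq_norm w + t * t * q"
      unfolding qform_add_smult[OF P psd_adj[OF psd] v w] q_def
      using q0 by (simp add: w_def[symmetric] conjugate_scalar_prod_self)
    finally show ?thesis by simp
  qed
  have "sq_norm w = 0"
  proof (rule ccontr)
    assume "sq_norm w \<noteq> 0"
    then have pos: "sq_norm w > 0" using sq_norm_nonneg[of w] by auto
    define t where "t = sq_norm w / (q + 1)"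
    have t: "t > 0" unfolding t_def using pos q by auto
    have "2 * sq_norm w \<le> t * q" using key[OF t] t by (simp add: mult.assoc)
    also have "t * q < sq_norm w" unfolding t_def using pos q by (simp add: field_simps)
    finally show False using pos by simp
  qed
  then show ?thesis using sq_norm_eq_0_iff[OF w] unfolding w_def by auto
qed

lemma conjugate_unit_vec: "conjugate (unit_vec n i :: complex vec) = unit_vec n i"
  by (rule eq_vecI) (auto simp: unit_vec_def)

lemma psd_diag_eq_0_imp_row_0:
  assumes psd: "psd P" and P: "P \<in> carrier_mat n n" and i: "i < n" and j: "j < n"
    and "P $$ (i, i) = 0"
  shows "P $$ (i, j) = 0"
proof -
  have "qform P (unit_vec n i) = P $$ (i, i)"
    unfolding qform_def using P i by (simp add: conjugate_unit_vec)
  then have "P *\<^sub>v unit_vec n i = 0\<^sub>v n"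
    using psd_qform_eq_0_imp_kernel[OF psd P] assms by simp
  then have "(P *\<^sub>v unit_vec n i) $ j = 0" using j by simp
  then have "P $$ (j, i) = 0" using P i j by simp
  moreover have "P $$ (i, j) = cnj (P $$ (j, i))"
    using psd_adj[OF psd] P i j by (metis adj_index carrier_matD)
  ultimately show ?thesis by simp
qed

lemma pd_imp_det_nonzero:
  assumes pd: "pd P" and P: "P \<in> carrier_mat n n"
  shows "det P \<noteq> 0"
proof
  assume "det P = 0"
  then obtain v where v: "v \<in> carrier_vec n" "v \<noteq> 0\<^sub>v n" "P *\<^sub>v v = 0\<^sub>v n"
    using det_0_iff_vec_prod_zero[OF P] by auto
  then show False using pd P unfolding pd_def by auto
qed

lemma psd_det_nonzero_imp_pd:
  assumes psd: "psd P" and P: "P \<in> carrier_mat n n" and d: "det P \<noteq> 0"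
  shows "pd P"
  unfolding pd_def
proof (intro conjI ballI impI)
  show "hermitian P" using psd unfolding psd_def by auto
  fix v :: "complex vec" assume v: "v \<in> carrier_vec (dim_row P)" "v \<noteq> 0\<^sub>v (dim_row P)"
  have "P *\<^sub>v v \<noteq> 0\<^sub>v n" using det_0_iff_vec_prod_zero[OF P] d v P by auto
  then have "Re (qform P v) \<noteq> 0" using psd_qform_eq_0_imp_kernel[OF psd P] v P by auto
  then show "0 < Re (conjugate v \<bullet> (P *\<^sub>v v))"
    using psdD[OF psd P] v P unfolding qform_def by force
qed

section \<open>Cholesky factorization\<close>

lemma conjugate_append_vec: "conjugate (a @\<^sub>v b) = conjugate a @\<^sub>v (conjugate b :: complex vec)"
  by (rule eq_vecI) (auto simp: conjugate_vec_def)

lemma qform_four_block_schur_complement: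
  fixes r :: real
  assumes b: "b \<in> carrier_mat 1 n" and X4: "X4 \<in> carrier_mat n n"
    and r: "r \<noteq> 0" and y: "y \<in> carrier_vec n"
  defines "a \<equiv> complex_of_real (- 1 / r) \<cdot>\<^sub>v (b *\<^sub>v y)"
  shows "qform (four_block_mat (complex_of_real r \<cdot>\<^sub>m 1\<^sub>m 1) b (adj b) X4) (a @\<^sub>v y)
    = qform (X4 - complex_of_real (1 / r) \<cdot>\<^sub>m (adj b * b)) y"
    (is "_ = qform ?S y")
proof -
  have a: "a \<in> carrier_vec 1" unfolding a_def using b y by auto
  have bb: "adj b * b \<in> carrier_mat n n" using b by auto
  have S: "?S \<in> carrier_mat n n" using bb by (simp add: minus_carrier_mat)
  have top: "(complex_of_real r \<cdot>\<^sub>m 1\<^sub>m 1) *\<^sub>v a + b *\<^sub>v y = 0\<^sub>v 1"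
    unfolding a_def using a b y r
    by (intro eq_vecI) (auto simp: smult_one_mult_vec mult.assoc[symmetric] simp flip: of_real_mult)
  have "adj b *\<^sub>v a = complex_of_real (- 1 / r) \<cdot>\<^sub>v ((adj b * b) *\<^sub>v y)"
    unfolding a_def using b y by (simp add: mult_mat_vec[of _ n 1] assoc_mult_mat_vec[of _ n 1 _ n])
  moreover have "?S *\<^sub>v y = X4 *\<^sub>v y - complex_of_real (1 / r) \<cdot>\<^sub>v ((adj b * b) *\<^sub>v y)"
    using b X4 y bb
    by (simp add: minus_mult_distrib_mat_vec[of _ n n] smult_mat_mult_vec[of _ n n] del: of_real_divide)
  ultimately have bottom: "adj b *\<^sub>v a + X4 *\<^sub>v y = ?S *\<^sub>v y"
    using bb X4 y by (intro eq_vecI) auto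
  have "four_block_mat (complex_of_real r \<cdot>\<^sub>m 1\<^sub>m 1) b (adj b) X4 *\<^sub>v (a @\<^sub>v y)
      = ((complex_of_real r \<cdot>\<^sub>m 1\<^sub>m 1) *\<^sub>v a + b *\<^sub>v y) @\<^sub>v (adj b *\<^sub>v a + X4 *\<^sub>v y)"
    by (rule four_block_mat_mult_vec) (use a b X4 y in auto)
  then have "qform (four_block_mat (complex_of_real r \<cdot>\<^sub>m 1\<^sub>m 1) b (adj b) X4) (a @\<^sub>v y)
      = (conjugate a @\<^sub>v conjugate y) \<bullet> (0\<^sub>v 1 @\<^sub>v ?S *\<^sub>v y)"
    unfolding qform_def top bottom by (simp add: conjugate_append_vec)
  also have "\<dots> = qform ?S y"
    unfolding qform_def using a y S by (subst scalar_prod_append[of _ 1 _ n]) auto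
  finally show ?thesis .
qed

lemma pd_schur_complement:
  fixes r :: real
  assumes b: "b \<in> carrier_mat 1 n" and X4: "X4 \<in> carrier_mat n n" "adj X4 = X4"
    and r: "0 < r"
    and pd: "pd (four_block_mat (complex_of_real r \<cdot>\<^sub>m 1\<^sub>m 1) b (adj b) X4)"
  shows "pd (X4 - complex_of_real (1 / r) \<cdot>\<^sub>m (adj b * b))"
    (is "pd ?S")
  unfolding pd_def
proof (intro conjI ballI impI)
  have bb: "adj b * b \<in> carrier_mat n n" using b by auto
  then have S: "?S \<in> carrier_mat n n" by (simp add: minus_carrier_mat)
  show "hermitian ?S"
    unfolding hermitian_def using S b X4 bb
    by (simp add: adj_minus[of X4 n n] adj_smult adj_mult[of _ n 1 _ n] del: of_real_divide)
  fix y :: "complex vec" assume "y \<in> carrier_vec (dim_row ?S)" "y \<noteq> 0\<^sub>v (dim_row ?S)"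
  then have y: "y \<in> carrier_vec n" "y \<noteq> 0\<^sub>v n" using S by auto
  define a where "a = complex_of_real (- 1 / r) \<cdot>\<^sub>v (b *\<^sub>v y)"
  have a: "a \<in> carrier_vec 1" unfolding a_def using b y by auto
  have "a @\<^sub>v y \<noteq> 0\<^sub>v (1 + n)"
  proof
    assume "a @\<^sub>v y = 0\<^sub>v (1 + n)"
    moreover have "y $ i = (a @\<^sub>v y) $ (1 + i)" if "i < n" for i using a y that by simp
    ultimately have "y = 0\<^sub>v n" using y by (intro eq_vecI) auto
    then show False using y by simp
  qed
  then have "0 < Re (qform (four_block_mat (complex_of_real r \<cdot>\<^sub>m 1\<^sub>m 1) b (adj b) X4) (a @\<^sub>v y))"
    using pd append_carrier_vec[OF a y(1)] X4 unfolding pd_def qform_def by auto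
  also have "qform (four_block_mat (complex_of_real r \<cdot>\<^sub>m 1\<^sub>m 1) b (adj b) X4) (a @\<^sub>v y) = qform ?S y"
    unfolding a_def by (rule qform_four_block_schur_complement) (use b X4 r y in auto)
  finally show "0 < Re (conjugate y \<bullet> (?S *\<^sub>v y))" unfolding qform_def .
qed

lemma gram_four_block_upper_triangular:
  fixes s :: real
  assumes s: "s \<noteq> 0" and b: "b \<in> carrier_mat 1 n" and T': "T' \<in> carrier_mat n n"
  defines "T \<equiv> four_block_mat (complex_of_real s \<cdot>\<^sub>m 1\<^sub>m 1) (complex_of_real (1 / s) \<cdot>\<^sub>m b) (0\<^sub>m n 1) T'"
  shows "adj T * T = four_block_mat (complex_of_real (s\<^sup>2) \<cdot>\<^sub>m 1\<^sub>m 1) b (adj b)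
           (complex_of_real (1 / s\<^sup>2) \<cdot>\<^sub>m (adj b * b) + adj T' * T')"
proof -
  have "adj T = four_block_mat (complex_of_real s \<cdot>\<^sub>m 1\<^sub>m 1) (0\<^sub>m 1 n)
      (complex_of_real (1 / s) \<cdot>\<^sub>m adj b) (adj T')"
    unfolding T_def using b T' by (subst adj_four_block_mat[of _ 1 1 _ n _ n]) (auto simp: adj_smult)
  then have "adj T * T = four_block_mat
      ((complex_of_real s \<cdot>\<^sub>m 1\<^sub>m 1) * (complex_of_real s \<cdot>\<^sub>m 1\<^sub>m 1) + 0\<^sub>m 1 n * 0\<^sub>m n 1)
      ((complex_of_real s \<cdot>\<^sub>m 1\<^sub>m 1) * (complex_of_real (1 / s) \<cdot>\<^sub>m b) + 0\<^sub>m 1 n * T')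
      ((complex_of_real (1 / s) \<cdot>\<^sub>m adj b) * (complex_of_real s \<cdot>\<^sub>m 1\<^sub>m 1) + adj T' * 0\<^sub>m n 1)
      ((complex_of_real (1 / s) \<cdot>\<^sub>m adj b) * (complex_of_real (1 / s) \<cdot>\<^sub>m b) + adj T' * T')"
    unfolding T_def by (simp only:) (rule mult_four_block_mat, use b T' in auto)
  also have "\<dots> = four_block_mat (complex_of_real (s\<^sup>2) \<cdot>\<^sub>m 1\<^sub>m 1) b (adj b)
           (complex_of_real (1 / s\<^sup>2) \<cdot>\<^sub>m (adj b * b) + adj T' * T')"
  proof (rule cong_four_block_mat)
    have b1: "b \<in> carrier_mat (Suc 0) n" using b by simp
    show "(complex_of_real s \<cdot>\<^sub>m 1\<^sub>m 1) * (complex_of_real s \<cdot>\<^sub>m 1\<^sub>m 1) + 0\<^sub>m 1 n * 0\<^sub>m n 1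
      = complex_of_real (s\<^sup>2) \<cdot>\<^sub>m 1\<^sub>m 1"
      by (rule eq_matI) (auto simp: scalar_prod_def power2_eq_square)
    show "(complex_of_real s \<cdot>\<^sub>m 1\<^sub>m 1) * (complex_of_real (1 / s) \<cdot>\<^sub>m b) + 0\<^sub>m 1 n * T' = b"
      using b1 T' s by (intro eq_matI) (auto simp: scalar_prod_def)
    show "(complex_of_real (1 / s) \<cdot>\<^sub>m adj b) * (complex_of_real s \<cdot>\<^sub>m 1\<^sub>m 1) + adj T' * 0\<^sub>m n 1 = adj b"
      using b1 T' s by (intro eq_matI) (auto simp: scalar_prod_def)
    show "(complex_of_real (1 / s) \<cdot>\<^sub>m adj b) * (complex_of_real (1 / s) \<cdot>\<^sub>m b) + adj T' * T'
      = complex_of_real (1 / s\<^sup>2) \<cdot>\<^sub>m (adj b * b) + adj T' * T'"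
      using b T' by (simp add: mult_smult_assoc_mat[of _ n 1] mult_smult_distrib[of _ n 1] smult_smult_mat
          power2_eq_square)
  qed
  finally show ?thesis .
qed

lemma pd_diag_real_pos:
  assumes pd: "pd X" and X: "X \<in> carrier_mat n n" and i: "i < n"
  shows "X $$ (i, i) = complex_of_real (Re (X $$ (i, i)))" "0 < Re (X $$ (i, i))"
proof -
  have "adj X = X" using pd unfolding pd_def hermitian_def by auto
  then have "cnj (X $$ (i, i)) = X $$ (i, i)" using X i by (metis adj_index carrier_matD)
  from arg_cong[OF this, of Im] have "Im (X $$ (i, i)) = 0" by simp
  then show "X $$ (i, i) = complex_of_real (Re (X $$ (i, i)))" by (simp add: complex_eq_iff)
  have pos: "\<forall>v \<in> carrier_vec n. v \<noteq> 0\<^sub>v n \<longrightarrow> 0 < Re (conjugate v \<bullet> (X *\<^sub>v v))"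
    using pd X unfolding pd_def by auto
  have "conjugate (unit_vec n i) \<bullet> (X *\<^sub>v unit_vec n i) = X $$ (i, i)"
    using X i by (simp add: conjugate_unit_vec)
  then show "0 < Re (X $$ (i, i))" using pos[rule_format, of "unit_vec n i"] i by simp
qed

lemma pd_four_block_split:
  assumes X: "X \<in> carrier_mat (Suc n) (Suc n)" and pd: "pd X"
  obtains r b X4 where "0 < r" "b \<in> carrier_mat 1 n" "X4 \<in> carrier_mat n n" "adj X4 = X4"
    "X = four_block_mat (complex_of_real r \<cdot>\<^sub>m 1\<^sub>m 1) b (adj b) X4"
proof -
  obtain X1 X2 X3 X4 where split: "split_block X 1 1 = (X1, X2, X3, X4)"
    by (cases "split_block X 1 1") auto
  have X2: "X2 \<in> carrier_mat 1 n" and X4: "X4 \<in> carrier_mat n n"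
    and X_blocks: "X = four_block_mat X1 X2 X3 X4"
    using split_block[OF split, of n n] X by auto
  have herm: "cnj (X $$ (j, i)) = X $$ (i, j)" if "i < Suc n" "j < Suc n" for i j
    using X pd that unfolding pd_def hermitian_def by (metis adj_index carrier_matD)
  define r where "r = Re (X $$ (0, 0))"
  have r: "0 < r" "X $$ (0, 0) = complex_of_real r"
    unfolding r_def using pd_diag_real_pos[OF pd X] by auto
  have "X1 = complex_of_real r \<cdot>\<^sub>m 1\<^sub>m 1" "X3 = adj X2" "adj X4 = X4"
    using split X r(2) unfolding split_block_def Let_def
    by (auto intro!: eq_matI simp: herm)
  then show ?thesis using that[OF r(1) X2 X4] X_blocks by auto
qed

lemma cholesky_factorization:
  assumes "X \<in> carrier_mat n n" "pd X"
  shows "\<exists>T \<in> carrier_mat n n. det T \<noteq> 0 \<and> X = adj T * T"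
  using assms
proof (induction n arbitrary: X)
  case 0
  then have "X = adj (1\<^sub>m 0) * 1\<^sub>m 0" by (intro eq_matI) auto
  then show ?case by (intro bexI[of _ "1\<^sub>m 0"]) auto
next
  case (Suc n X)
  obtain r b X4 where r: "0 < r" and b: "b \<in> carrier_mat 1 n" and X4: "X4 \<in> carrier_mat n n" "adj X4 = X4"
    and X: "X = four_block_mat (complex_of_real r \<cdot>\<^sub>m 1\<^sub>m 1) b (adj b) X4"
    using pd_four_block_split[OF Suc.prems] .
  define S where "S = X4 - complex_of_real (1 / r) \<cdot>\<^sub>m (adj b * b)"
  have S: "S \<in> carrier_mat n n" unfolding S_def using b X4 by auto
  have "pd S"
    unfolding S_def by (rule pd_schur_complement[OF b X4 r]) (use Suc.prems X in auto)
  then obtain T' where T': "T' \<in> carrier_mat n n" "det T' \<noteq> 0" "S = adj T' * T'"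
    using Suc.IH[OF S] by blast
  define s where "s = sqrt r"
  have s: "s \<noteq> 0" "s\<^sup>2 = r" unfolding s_def using r by auto
  define T where "T = four_block_mat (complex_of_real s \<cdot>\<^sub>m 1\<^sub>m 1) (complex_of_real (1 / s) \<cdot>\<^sub>m b) (0\<^sub>m n 1) T'"
  have T: "T \<in> carrier_mat (Suc n) (Suc n)" unfolding T_def using T' by auto
  have "det T = det (complex_of_real s \<cdot>\<^sub>m 1\<^sub>m 1) * det T'"
    unfolding T_def by (rule det_four_block_mat_lower_left_zero_col) (use b T' in auto)
  then have "det T \<noteq> 0" using s T' by simp
  moreover have "X4 = complex_of_real (1 / r) \<cdot>\<^sub>m (adj b * b) + S"
    unfolding S_def using b X4 by (intro eq_matI) auto
  then have "adj T * T = X"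
    unfolding T_def gram_four_block_upper_triangular[OF s(1) b T'(1)] s(2) X
    using T'(3) by simp
  ultimately show ?case using T by blast
qed

section \<open>The smallest eigenvalue of a Hermitian matrix\<close>

lemma mult_mat_vec_index_bound:
  assumes K: "K \<in> carrier_mat n n" and u: "u \<in> carrier_vec n" and i: "i < n"
  shows "cmod ((K *\<^sub>v u) $ i) \<le> (\<Sum>j<n. cmod (K $$ (i, j))) * sqrt (sq_norm u)"
proof -
  have "cmod ((K *\<^sub>v u) $ i) \<le> (\<Sum>j<n. cmod (K $$ (i, j) * u $ j))"
    using K u i by (simp add: scalar_prod_def lessThan_atLeast0 norm_sum)
  also have "\<dots> \<le> (\<Sum>j<n. cmod (K $$ (i, j)) * sqrt (sq_norm u))"
    by (rule sum_mono) (use u in \<open>auto simp: norm_mult intro!: mult_left_mono cmod_le_sqrt_sq_norm\<close>)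
  finally show ?thesis by (simp add: sum_distrib_right)
qed

lemma sq_norm_mult_mat_vec_le:
  assumes K: "K \<in> carrier_mat n n" and u: "u \<in> carrier_vec n"
  shows "sq_norm (K *\<^sub>v u) \<le> (\<Sum>i<n. (\<Sum>j<n. cmod (K $$ (i, j)))\<^sup>2) * sq_norm u"
proof -
  have "sq_norm (K *\<^sub>v u) = (\<Sum>i<n. (cmod ((K *\<^sub>v u) $ i))\<^sup>2)" unfolding sq_norm_def using K by simp
  also have "\<dots> \<le> (\<Sum>i<n. ((\<Sum>j<n. cmod (K $$ (i, j))) * sqrt (sq_norm u))\<^sup>2)"
    by (rule sum_mono, rule power_mono) (use mult_mat_vec_index_bound[OF K u] in auto)
  also have "\<dots> = (\<Sum>i<n. (\<Sum>j<n. cmod (K $$ (i, j)))\<^sup>2) * sq_norm u"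
    by (simp add: power_mult_distrib sum_distrib_right[symmetric] sq_norm_nonneg)
  finally show ?thesis .
qed

lemma qform_lower_bound:
  assumes M: "M \<in> carrier_mat n n" and v: "v \<in> carrier_vec n"
  shows "- (\<Sum>i<n. \<Sum>j<n. cmod (M $$ (i, j))) * sq_norm v \<le> Re (qform M v)"
proof -
  let ?s = "sqrt (sq_norm v)"
  have "cmod (qform M v) \<le> (\<Sum>i<n. cmod (cnj (v $ i) * (M *\<^sub>v v) $ i))"
    unfolding qform_def scalar_prod_def using M v
    by (simp add: norm_sum lessThan_atLeast0 del: complex_cnj_mult)
  also have "\<dots> \<le> (\<Sum>i<n. ?s * ((\<Sum>j<n. cmod (M $$ (i, j))) * ?s))"
    unfolding norm_mult complex_mod_cnj
  proof (intro sum_mono mult_mono)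
    fix i assume "i \<in> {..<n}"
    then show "cmod (v $ i) \<le> ?s" "cmod ((M *\<^sub>v v) $ i) \<le> (\<Sum>j<n. cmod (M $$ (i, j))) * ?s"
      using cmod_le_sqrt_sq_norm[of i v] mult_mat_vec_index_bound[OF M v, of i] v by auto
  qed (use sq_norm_nonneg[of v] in \<open>simp_all add: sum_nonneg\<close>)
  also have "\<dots> = (\<Sum>i<n. \<Sum>j<n. cmod (M $$ (i, j))) * sq_norm v"
  proof -
    have "?s * ?s = sq_norm v" using sq_norm_nonneg[of v] by simp
    then show ?thesis
      by (simp add: mult.assoc[symmetric] sum_distrib_left mult.commute del: real_sqrt_mult_self)
  qed
  finally show ?thesis using abs_Re_le_cmod[of "qform M v"] by linarith
qed

lemma pd_imp_psd_shift_pos: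
  assumes pd: "pd P" and P: "P \<in> carrier_mat n n"
  shows "\<exists>\<epsilon> > 0. psd (P - complex_of_real \<epsilon> \<cdot>\<^sub>m 1\<^sub>m n)"
proof -
  obtain T where T: "T \<in> carrier_mat n n" "det T \<noteq> 0" and PT: "P = adj T * T"
    using cholesky_factorization[OF P pd] by blast
  define K where "K = minv T"
  have K: "K \<in> carrier_mat n n" "K * T = 1\<^sub>m n" unfolding K_def using det_nonzero_minv[OF T] by auto
  define c where "c = (\<Sum>i<n. (\<Sum>j<n. cmod (K $$ (i, j)))\<^sup>2) + 1"
  have c: "0 < c" unfolding c_def by (simp add: add_nonneg_pos sum_nonneg)
  have "1 / c * sq_norm v \<le> Re (qform P v)" if v: "v \<in> carrier_vec n" for v
  proof -
    have "v = K *\<^sub>v (T *\<^sub>v v)" using K T v by (simp flip: assoc_mult_mat_vec)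
    then have "sq_norm v \<le> (c - 1) * sq_norm (T *\<^sub>v v)"
      unfolding c_def using sq_norm_mult_mat_vec_le[OF K(1), of "T *\<^sub>v v"] T v by simp
    also have "\<dots> \<le> c * sq_norm (T *\<^sub>v v)"
      using sq_norm_nonneg[of "T *\<^sub>v v"] by (simp add: algebra_simps)
    finally have "1 / c * sq_norm v \<le> sq_norm (T *\<^sub>v v)" using c by (simp add: field_simps)
    also have "\<dots> = Re (qform P v)" unfolding PT qform_gram[OF T(1) v] by simp
    finally show ?thesis .
  qed
  then have "psd (P - complex_of_real (1 / c) \<cdot>\<^sub>m 1\<^sub>m n)"
    using P pd unfolding pd_def hermitian_def
    by (intro psdI[of _ n]) (auto simp: adj_minus[of _ n n] adj_smult qform_shift simp del: of_real_divide)
  then show ?thesis using c by (intro exI[of _ "1 / c"]) auto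
qed

lemma psd_shift_iff:
  assumes M: "M \<in> carrier_mat n n" "adj M = M"
  shows "psd (M - complex_of_real \<xi> \<cdot>\<^sub>m 1\<^sub>m n) \<longleftrightarrow> (\<forall>v \<in> carrier_vec n. \<xi> * sq_norm v \<le> Re (qform M v))"
proof
  assume "psd (M - complex_of_real \<xi> \<cdot>\<^sub>m 1\<^sub>m n)"
  then show "\<forall>v \<in> carrier_vec n. \<xi> * sq_norm v \<le> Re (qform M v)"
    using psdD[of _ n] qform_shift[OF M(1)] M by fastforce
next
  assume "\<forall>v \<in> carrier_vec n. \<xi> * sq_norm v \<le> Re (qform M v)"
  then show "psd (M - complex_of_real \<xi> \<cdot>\<^sub>m 1\<^sub>m n)"
    using M by (intro psdI[of _ n]) (auto simp: adj_minus[of _ n n] adj_smult qform_shift)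
qed

lemma psd_shift_imp_le_eigenvalue:
  assumes M: "M \<in> carrier_mat n n" and psd: "psd (M - complex_of_real \<xi> \<cdot>\<^sub>m 1\<^sub>m n)"
    and ev: "eigenvalue M (complex_of_real x)"
  shows "\<xi> \<le> x"
proof -
  obtain w where w: "w \<in> carrier_vec n" "w \<noteq> 0\<^sub>v n" "M *\<^sub>v w = complex_of_real x \<cdot>\<^sub>v w"
    using ev M unfolding eigenvalue_def eigenvector_def by auto
  have "Re (qform M w) = x * sq_norm w"
    unfolding qform_def w(3) using w by (simp add: conjugate_scalar_prod_self)
  moreover have "M - complex_of_real \<xi> \<cdot>\<^sub>m 1\<^sub>m n \<in> carrier_mat n n" by (simp add: minus_carrier_mat)
  then have "0 \<le> Re (qform (M - complex_of_real \<xi> \<cdot>\<^sub>m 1\<^sub>m n) w)"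
    using psdD[OF psd _ w(1)] by simp
  ultimately have "\<xi> * sq_norm w \<le> x * sq_norm w" using qform_shift[OF M w(1)] by simp
  then show ?thesis using sq_norm_pos[OF w(1,2)] by simp
qed

lemma eigenvalue_iff_det_shift:
  fixes M :: "'a :: field mat"
  assumes "M \<in> carrier_mat n n"
  shows "eigenvalue M e \<longleftrightarrow> det (M - e \<cdot>\<^sub>m 1\<^sub>m n) = 0"
proof -
  have "char_matrix M e = M - e \<cdot>\<^sub>m 1\<^sub>m n"
    unfolding char_matrix_def using assms by (intro eq_matI) auto
  then show ?thesis using eigenvalue_det[OF assms] by simp
qed

lemma psd_shift_max_exists:
  assumes M: "M \<in> carrier_mat n n" "adj M = M" and n: "0 < n"
  obtains \<xi>0 where "psd (M - complex_of_real \<xi>0 \<cdot>\<^sub>m 1\<^sub>m n)"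
    and "\<And>\<xi>. psd (M - complex_of_real \<xi> \<cdot>\<^sub>m 1\<^sub>m n) \<Longrightarrow> \<xi> \<le> \<xi>0"
proof -
  define S where "S = {\<xi>. psd (M - complex_of_real \<xi> \<cdot>\<^sub>m 1\<^sub>m n)}"
  have S_iff: "\<xi> \<in> S \<longleftrightarrow> (\<forall>v \<in> carrier_vec n. \<xi> * sq_norm v \<le> Re (qform M v))" for \<xi>
    unfolding S_def using psd_shift_iff[OF M] by simp
  have "- (\<Sum>i<n. \<Sum>j<n. cmod (M $$ (i, j))) \<in> S"
    unfolding S_iff using qform_lower_bound[OF M(1)] by auto
  then have S_ne: "S \<noteq> {}" by auto
  have "\<xi> \<le> Re (M $$ (0, 0))" if "\<xi> \<in> S" for \<xi>
    using that[unfolded S_iff, rule_format, of "unit_vec n 0"] M n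
    by (simp add: qform_def conjugate_unit_vec sq_norm_unit_vec)
  then have S_bdd: "bdd_above S" by (rule bdd_aboveI)
  have "Sup S \<in> S"
    unfolding S_iff
  proof
    fix v :: "complex vec" assume v: "v \<in> carrier_vec n"
    show "Sup S * sq_norm v \<le> Re (qform M v)"
    proof (cases "v = 0\<^sub>v n")
      case True
      then show ?thesis using M by (simp add: qform_def sq_norm_def)
    next
      case False
      then have pos: "0 < sq_norm v" using sq_norm_pos[OF v] by simp
      have "Sup S \<le> Re (qform M v) / sq_norm v"
        using S_ne v pos by (intro cSup_least) (auto simp: S_iff field_simps)
      then show ?thesis using pos by (simp add: field_simps)
    qed
  qed
  then show ?thesis using that cSup_upper[OF _ S_bdd] unfolding S_def by blast
qed

text \<open>At the largest admissible shift \<open>\<xi>0\<close> the matrix \<open>M - \<xi>0 I\<close> is singular, since a positive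
  definite matrix leaves room for a larger shift; so \<open>\<xi>0\<close> is an eigenvalue.\<close>

lemma psd_shift_max_eigenvalue:
  assumes M: "M \<in> carrier_mat n n" "adj M = M" and n: "0 < n"
  obtains \<xi>0 where "psd (M - complex_of_real \<xi>0 \<cdot>\<^sub>m 1\<^sub>m n)" "eigenvalue M (complex_of_real \<xi>0)"
proof -
  obtain \<xi>0 where psd: "psd (M - complex_of_real \<xi>0 \<cdot>\<^sub>m 1\<^sub>m n)"
    and max: "\<And>\<xi>. psd (M - complex_of_real \<xi> \<cdot>\<^sub>m 1\<^sub>m n) \<Longrightarrow> \<xi> \<le> \<xi>0"
    using psd_shift_max_exists[OF M n] by blast
  have P: "M - complex_of_real \<xi>0 \<cdot>\<^sub>m 1\<^sub>m n \<in> carrier_mat n n" by (simp add: minus_carrier_mat)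
  have "det (M - complex_of_real \<xi>0 \<cdot>\<^sub>m 1\<^sub>m n) = 0"
  proof (rule ccontr)
    assume "det (M - complex_of_real \<xi>0 \<cdot>\<^sub>m 1\<^sub>m n) \<noteq> 0"
    then have "pd (M - complex_of_real \<xi>0 \<cdot>\<^sub>m 1\<^sub>m n)"
      using psd_det_nonzero_imp_pd[OF psd P] by auto
    then obtain \<epsilon> where "0 < \<epsilon>" "psd (M - complex_of_real \<xi>0 \<cdot>\<^sub>m 1\<^sub>m n - complex_of_real \<epsilon> \<cdot>\<^sub>m 1\<^sub>m n)"
      using pd_imp_psd_shift_pos[OF _ P] by blast
    moreover have "M - complex_of_real \<xi>0 \<cdot>\<^sub>m 1\<^sub>m n - complex_of_real \<epsilon> \<cdot>\<^sub>m 1\<^sub>m n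
        = M - complex_of_real (\<xi>0 + \<epsilon>) \<cdot>\<^sub>m 1\<^sub>m n"
      using M by (intro eq_matI) (auto simp: algebra_simps)
    ultimately show False using max[of "\<xi>0 + \<epsilon>"] by auto
  qed
  then show ?thesis using that psd eigenvalue_iff_det_shift[OF M(1)] by auto
qed

lemma finite_real_eigenvalues:
  assumes M: "(M :: complex mat) \<in> carrier_mat n n"
  shows "finite {x :: real. eigenvalue M (complex_of_real x)}"
proof -
  have "char_poly M \<noteq> 0" using degree_monic_char_poly[OF M] by auto
  then have "finite (Re ` {z. poly (char_poly M) z = 0})" using poly_roots_finite by blast
  moreover have "{x :: real. eigenvalue M (complex_of_real x)} \<subseteq> Re ` {z. poly (char_poly M) z = 0}"
    using eigenvalue_root_char_poly[OF M] by (auto intro!: image_eqI[where x = "complex_of_real _"])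
  ultimately show ?thesis by (rule finite_subset[rotated])
qed

lemma psd_shift_iff_le_lambda_min:
  assumes M: "M \<in> carrier_mat n n" "adj M = M" and n: "0 < n"
  shows "psd (M - complex_of_real \<xi> \<cdot>\<^sub>m 1\<^sub>m n) \<longleftrightarrow> \<xi> \<le> lambda_min M"
proof -
  obtain \<xi>0 where psd0: "psd (M - complex_of_real \<xi>0 \<cdot>\<^sub>m 1\<^sub>m n)"
    and ev0: "eigenvalue M (complex_of_real \<xi>0)"
    using psd_shift_max_eigenvalue[OF M n] .
  have "lambda_min M = \<xi>0"
    unfolding lambda_min_def
    by (rule Min_eqI) (use finite_real_eigenvalues[OF M(1)] ev0 psd_shift_imp_le_eigenvalue[OF M(1) psd0] in auto)
  moreover have "psd (M - complex_of_real \<xi> \<cdot>\<^sub>m 1\<^sub>m n)" if "\<xi> \<le> \<xi>0"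
  proof -
    have "\<xi> * sq_norm v \<le> \<xi>0 * sq_norm v" for v
      using that sq_norm_nonneg[of v] by (rule mult_right_mono)
    then show ?thesis using psd0 unfolding psd_shift_iff[OF M] by (meson order_trans)
  qed
  ultimately show ?thesis using psd_shift_imp_le_eigenvalue[OF M(1) _ ev0] by auto
qed

section \<open>Block matrices with three block rows and columns\<close>

definition blk3_shape :: "complex mat \<Rightarrow> complex mat \<Rightarrow> complex mat \<Rightarrow> complex mat \<Rightarrow> complex mat
    \<Rightarrow> complex mat \<Rightarrow> complex mat \<Rightarrow> complex mat \<Rightarrow> complex mat \<Rightarrow> nat \<Rightarrow> nat \<Rightarrow> nat \<Rightarrow> bool" where
  "blk3_shape M11 M12 M13 M21 M22 M23 M31 M32 M33 n1 n2 n3 \<longleftrightarrow>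
     M11 \<in> carrier_mat n1 n1 \<and> M12 \<in> carrier_mat n1 n2 \<and> M13 \<in> carrier_mat n1 n3 \<and>
     M21 \<in> carrier_mat n2 n1 \<and> M22 \<in> carrier_mat n2 n2 \<and> M23 \<in> carrier_mat n2 n3 \<and>
     M31 \<in> carrier_mat n3 n1 \<and> M32 \<in> carrier_mat n3 n2 \<and> M33 \<in> carrier_mat n3 n3"

lemma blk3_shapeI [intro!]:
  "M11 \<in> carrier_mat n1 n1 \<Longrightarrow> M12 \<in> carrier_mat n1 n2 \<Longrightarrow> M13 \<in> carrier_mat n1 n3 \<Longrightarrow>
   M21 \<in> carrier_mat n2 n1 \<Longrightarrow> M22 \<in> carrier_mat n2 n2 \<Longrightarrow> M23 \<in> carrier_mat n2 n3 \<Longrightarrow>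
   M31 \<in> carrier_mat n3 n1 \<Longrightarrow> M32 \<in> carrier_mat n3 n2 \<Longrightarrow> M33 \<in> carrier_mat n3 n3 \<Longrightarrow>
   blk3_shape M11 M12 M13 M21 M22 M23 M31 M32 M33 n1 n2 n3"
  unfolding blk3_shape_def by auto

lemma blk3_shapeD:
  assumes "blk3_shape M11 M12 M13 M21 M22 M23 M31 M32 M33 n1 n2 n3"
  shows "dim_row M11 = n1" "dim_col M11 = n1" "dim_row M12 = n1" "dim_col M12 = n2"
    "dim_row M13 = n1" "dim_col M13 = n3" "dim_row M21 = n2" "dim_col M21 = n1"
    "dim_row M22 = n2" "dim_col M22 = n2" "dim_row M23 = n2" "dim_col M23 = n3"
    "dim_row M31 = n3" "dim_col M31 = n1" "dim_row M32 = n3" "dim_col M32 = n2"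
    "dim_row M33 = n3" "dim_col M33 = n3"
  using assms unfolding blk3_shape_def by auto

lemma blk3_carrier [simp]:
  "M11 \<in> carrier_mat n1 n1 \<Longrightarrow> M22 \<in> carrier_mat n2 n2 \<Longrightarrow> M33 \<in> carrier_mat n3 n3 \<Longrightarrow>
   blk3 M11 M12 M13 M21 M22 M23 M31 M32 M33 \<in> carrier_mat (n1 + n2 + n3) (n1 + n2 + n3)"
  unfolding blk3_def by auto

lemma blk3_dim [simp]:
  "dim_row (blk3 M11 M12 M13 M21 M22 M23 M31 M32 M33) = dim_row M11 + dim_row M22 + dim_row M33"
  "dim_col (blk3 M11 M12 M13 M21 M22 M23 M31 M32 M33) = dim_col M11 + dim_col M22 + dim_col M33"
  unfolding blk3_def by auto

lemma blk3_index:
  assumes "blk3_shape M11 M12 M13 M21 M22 M23 M31 M32 M33 n1 n2 n3"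
    and "i < n1 + n2 + n3" "j < n1 + n2 + n3"
  shows "blk3 M11 M12 M13 M21 M22 M23 M31 M32 M33 $$ (i, j) =
    (if i < n1 then
       if j < n1 then M11 $$ (i, j) else if j < n1 + n2 then M12 $$ (i, j - n1) else M13 $$ (i, j - n1 - n2)
     else if i < n1 + n2 then
       if j < n1 then M21 $$ (i - n1, j) else if j < n1 + n2 then M22 $$ (i - n1, j - n1)
       else M23 $$ (i - n1, j - n1 - n2)
     else
       if j < n1 then M31 $$ (i - n1 - n2, j) else if j < n1 + n2 then M32 $$ (i - n1 - n2, j - n1)
       else M33 $$ (i - n1 - n2, j - n1 - n2))"
  using assms unfolding blk3_shape_def blk3_def append_rows_def hcat_def
  by (auto simp: diff_diff_add)

lemma row_blk3:
  assumes shape: "blk3_shape M11 M12 M13 M21 M22 M23 M31 M32 M33 n1 n2 n3"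
  shows "i < n1 \<Longrightarrow> row (blk3 M11 M12 M13 M21 M22 M23 M31 M32 M33) i
      = (row M11 i @\<^sub>v row M12 i) @\<^sub>v row M13 i"
    "n1 \<le> i \<Longrightarrow> i < n1 + n2 \<Longrightarrow> row (blk3 M11 M12 M13 M21 M22 M23 M31 M32 M33) i
      = (row M21 (i - n1) @\<^sub>v row M22 (i - n1)) @\<^sub>v row M23 (i - n1)"
    "n1 + n2 \<le> i \<Longrightarrow> i < n1 + n2 + n3 \<Longrightarrow> row (blk3 M11 M12 M13 M21 M22 M23 M31 M32 M33) i
      = (row M31 (i - n1 - n2) @\<^sub>v row M32 (i - n1 - n2)) @\<^sub>v row M33 (i - n1 - n2)"
  using blk3_shapeD[OF shape] by (auto intro!: eq_vecI simp: blk3_index[OF shape] diff_diff_add)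

lemma col_blk3:
  assumes shape: "blk3_shape M11 M12 M13 M21 M22 M23 M31 M32 M33 n1 n2 n3"
  shows "j < n1 \<Longrightarrow> col (blk3 M11 M12 M13 M21 M22 M23 M31 M32 M33) j
      = (col M11 j @\<^sub>v col M21 j) @\<^sub>v col M31 j"
    "n1 \<le> j \<Longrightarrow> j < n1 + n2 \<Longrightarrow> col (blk3 M11 M12 M13 M21 M22 M23 M31 M32 M33) j
      = (col M12 (j - n1) @\<^sub>v col M22 (j - n1)) @\<^sub>v col M32 (j - n1)"
    "n1 + n2 \<le> j \<Longrightarrow> j < n1 + n2 + n3 \<Longrightarrow> col (blk3 M11 M12 M13 M21 M22 M23 M31 M32 M33) j
      = (col M13 (j - n1 - n2) @\<^sub>v col M23 (j - n1 - n2)) @\<^sub>v col M33 (j - n1 - n2)"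
  using blk3_shapeD[OF shape] by (auto intro!: eq_vecI simp: blk3_index[OF shape] diff_diff_add)

lemma scalar_prod_append3:
  assumes "dim_vec a1 = dim_vec b1" "dim_vec a2 = dim_vec b2" "dim_vec a3 = dim_vec b3"
  shows "((a1 @\<^sub>v a2) @\<^sub>v a3) \<bullet> ((b1 @\<^sub>v b2) @\<^sub>v b3) = a1 \<bullet> b1 + a2 \<bullet> b2 + a3 \<bullet> b3"
proof -
  have "((a1 @\<^sub>v a2) @\<^sub>v a3) \<bullet> ((b1 @\<^sub>v b2) @\<^sub>v b3) = (a1 @\<^sub>v a2) \<bullet> (b1 @\<^sub>v b2) + a3 \<bullet> b3"
    by (rule scalar_prod_append) (use assms in \<open>auto intro: carrier_vecI\<close>)
  also have "(a1 @\<^sub>v a2) \<bullet> (b1 @\<^sub>v b2) = a1 \<bullet> b1 + a2 \<bullet> b2"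
    by (rule scalar_prod_append) (use assms in \<open>auto intro: carrier_vecI\<close>)
  finally show ?thesis .
qed

lemma blk3_mult:
  assumes P: "blk3_shape P11 P12 P13 P21 P22 P23 P31 P32 P33 n1 n2 n3"
    and Q: "blk3_shape Q11 Q12 Q13 Q21 Q22 Q23 Q31 Q32 Q33 n1 n2 n3"
  shows "blk3 P11 P12 P13 P21 P22 P23 P31 P32 P33 * blk3 Q11 Q12 Q13 Q21 Q22 Q23 Q31 Q32 Q33 =
    blk3 (P11 * Q11 + P12 * Q21 + P13 * Q31) (P11 * Q12 + P12 * Q22 + P13 * Q32) (P11 * Q13 + P12 * Q23 + P13 * Q33)
         (P21 * Q11 + P22 * Q21 + P23 * Q31) (P21 * Q12 + P22 * Q22 + P23 * Q32) (P21 * Q13 + P22 * Q23 + P23 * Q33)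
         (P31 * Q11 + P32 * Q21 + P33 * Q31) (P31 * Q12 + P32 * Q22 + P33 * Q32) (P31 * Q13 + P32 * Q23 + P33 * Q33)"
    (is "?L = blk3 ?R11 ?R12 ?R13 ?R21 ?R22 ?R23 ?R31 ?R32 ?R33")
proof -
  note dims = blk3_shapeD[OF P] blk3_shapeD[OF Q]
  have R: "blk3_shape ?R11 ?R12 ?R13 ?R21 ?R22 ?R23 ?R31 ?R32 ?R33 n1 n2 n3"
    using P Q unfolding blk3_shape_def carrier_mat_def by auto
  show ?thesis
  proof (rule eq_matI)
    fix i j assume "i < dim_row (blk3 ?R11 ?R12 ?R13 ?R21 ?R22 ?R23 ?R31 ?R32 ?R33)"
      "j < dim_col (blk3 ?R11 ?R12 ?R13 ?R21 ?R22 ?R23 ?R31 ?R32 ?R33)"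
    then have i: "i < n1 + n2 + n3" and j: "j < n1 + n2 + n3" using dims by auto
    have "?L $$ (i, j) = row (blk3 P11 P12 P13 P21 P22 P23 P31 P32 P33) i
        \<bullet> col (blk3 Q11 Q12 Q13 Q21 Q22 Q23 Q31 Q32 Q33) j"
      using i j dims by simp
    also have "\<dots> = blk3 ?R11 ?R12 ?R13 ?R21 ?R22 ?R23 ?R31 ?R32 ?R33 $$ (i, j)"
      unfolding blk3_index[OF R i j] using i j
      by (cases "i < n1"; cases "i < n1 + n2"; cases "j < n1"; cases "j < n1 + n2")
         (simp_all add: row_blk3[OF P] col_blk3[OF Q] scalar_prod_append3 dims)
    finally show "?L $$ (i, j) = blk3 ?R11 ?R12 ?R13 ?R21 ?R22 ?R23 ?R31 ?R32 ?R33 $$ (i, j)" .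
  qed (use dims in auto)
qed

lemma adj_blk3:
  assumes P: "blk3_shape P11 P12 P13 P21 P22 P23 P31 P32 P33 n1 n2 n3"
  shows "adj (blk3 P11 P12 P13 P21 P22 P23 P31 P32 P33) =
    blk3 (adj P11) (adj P21) (adj P31) (adj P12) (adj P22) (adj P32) (adj P13) (adj P23) (adj P33)"
proof -
  note dims = blk3_shapeD[OF P]
  have R: "blk3_shape (adj P11) (adj P21) (adj P31) (adj P12) (adj P22) (adj P32) (adj P13) (adj P23) (adj P33) n1 n2 n3"
    using P unfolding blk3_shape_def by auto
  show ?thesis
    by (rule eq_matI) (use dims in \<open>auto simp: blk3_index[OF R] blk3_index[OF P]\<close>)
qed

definition blk3_diag :: "complex mat \<Rightarrow> complex mat \<Rightarrow> complex mat \<Rightarrow> complex mat" where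
  "blk3_diag P1 P2 P3 = blk3
     P1 (0\<^sub>m (dim_row P1) (dim_col P2)) (0\<^sub>m (dim_row P1) (dim_col P3))
     (0\<^sub>m (dim_row P2) (dim_col P1)) P2 (0\<^sub>m (dim_row P2) (dim_col P3))
     (0\<^sub>m (dim_row P3) (dim_col P1)) (0\<^sub>m (dim_row P3) (dim_col P2)) P3"

lemma blk3_diag_shape:
  "P1 \<in> carrier_mat n1 n1 \<Longrightarrow> P2 \<in> carrier_mat n2 n2 \<Longrightarrow> P3 \<in> carrier_mat n3 n3 \<Longrightarrow>
   blk3_diag P1 P2 P3 = blk3 P1 (0\<^sub>m n1 n2) (0\<^sub>m n1 n3) (0\<^sub>m n2 n1) P2 (0\<^sub>m n2 n3) (0\<^sub>m n3 n1) (0\<^sub>m n3 n2) P3"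
  "P1 \<in> carrier_mat n1 n1 \<Longrightarrow> P2 \<in> carrier_mat n2 n2 \<Longrightarrow> P3 \<in> carrier_mat n3 n3 \<Longrightarrow>
   blk3_shape P1 (0\<^sub>m n1 n2) (0\<^sub>m n1 n3) (0\<^sub>m n2 n1) P2 (0\<^sub>m n2 n3) (0\<^sub>m n3 n1) (0\<^sub>m n3 n2) P3 n1 n2 n3"
  unfolding blk3_diag_def by auto

lemma blk3_diag_carrier [simp]:
  "P1 \<in> carrier_mat n1 n1 \<Longrightarrow> P2 \<in> carrier_mat n2 n2 \<Longrightarrow> P3 \<in> carrier_mat n3 n3 \<Longrightarrow>
   blk3_diag P1 P2 P3 \<in> carrier_mat (n1 + n2 + n3) (n1 + n2 + n3)"
  unfolding blk3_diag_def by auto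

lemma blk3_diag_one: "blk3_diag (1\<^sub>m n1) (1\<^sub>m n2) (1\<^sub>m n3) = 1\<^sub>m (n1 + n2 + n3)"
proof -
  have "blk3_shape (1\<^sub>m n1) (0\<^sub>m n1 n2) (0\<^sub>m n1 n3) (0\<^sub>m n2 n1) (1\<^sub>m n2) (0\<^sub>m n2 n3)
      (0\<^sub>m n3 n1) (0\<^sub>m n3 n2) (1\<^sub>m n3) n1 n2 n3"
    by auto
  then show ?thesis
    unfolding blk3_diag_def by (intro eq_matI) (auto simp: blk3_index)
qed

lemma adj_blk3_diag:
  assumes "P1 \<in> carrier_mat n1 n1" "P2 \<in> carrier_mat n2 n2" "P3 \<in> carrier_mat n3 n3"
  shows "adj (blk3_diag P1 P2 P3) = blk3_diag (adj P1) (adj P2) (adj P3)"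
  unfolding blk3_diag_shape(1)[OF assms] adj_blk3[OF blk3_diag_shape(2)[OF assms]]
  using assms by (simp add: blk3_diag_def)

lemma zero_mat_dim_simps:
  "dim_row A = a \<Longrightarrow> dim_col A = b \<Longrightarrow> A + 0\<^sub>m a b = (A :: complex mat)"
  "dim_row A = a \<Longrightarrow> dim_col A = b \<Longrightarrow> 0\<^sub>m a b + A = (A :: complex mat)"
  "dim_row A = b \<Longrightarrow> 0\<^sub>m a b * A = 0\<^sub>m a (dim_col A)"
  "dim_col A = a \<Longrightarrow> A * 0\<^sub>m a b = 0\<^sub>m (dim_row A) b"
  by (rule eq_matI; simp)+

lemma blk3_diag_mult:
  assumes P: "P1 \<in> carrier_mat n1 n1" "P2 \<in> carrier_mat n2 n2" "P3 \<in> carrier_mat n3 n3"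
    and Q: "Q1 \<in> carrier_mat n1 n1" "Q2 \<in> carrier_mat n2 n2" "Q3 \<in> carrier_mat n3 n3"
  shows "blk3_diag P1 P2 P3 * blk3_diag Q1 Q2 Q3 = blk3_diag (P1 * Q1) (P2 * Q2) (P3 * Q3)"
  unfolding blk3_diag_shape(1)[OF P] blk3_diag_shape(1)[OF Q]
    blk3_mult[OF blk3_diag_shape(2)[OF P] blk3_diag_shape(2)[OF Q]]
  using P Q by (simp add: blk3_diag_def zero_mat_dim_simps)

lemma blk3_diag_congruence:
  assumes M: "blk3_shape M11 M12 M13 M21 M22 M23 M31 M32 M33 n1 n2 n3"
    and P: "P1 \<in> carrier_mat n1 n1" "P2 \<in> carrier_mat n2 n2" "P3 \<in> carrier_mat n3 n3"
    and Q: "Q1 \<in> carrier_mat n1 n1" "Q2 \<in> carrier_mat n2 n2" "Q3 \<in> carrier_mat n3 n3"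
  shows "blk3_diag P1 P2 P3 * blk3 M11 M12 M13 M21 M22 M23 M31 M32 M33 * blk3_diag Q1 Q2 Q3
    = blk3 (P1 * M11 * Q1) (P1 * M12 * Q2) (P1 * M13 * Q3) (P2 * M21 * Q1) (P2 * M22 * Q2) (P2 * M23 * Q3)
        (P3 * M31 * Q1) (P3 * M32 * Q2) (P3 * M33 * Q3)"
proof -
  note dims = blk3_shapeD[OF M]
  have PM: "blk3_diag P1 P2 P3 * blk3 M11 M12 M13 M21 M22 M23 M31 M32 M33
    = blk3 (P1 * M11) (P1 * M12) (P1 * M13) (P2 * M21) (P2 * M22) (P2 * M23) (P3 * M31) (P3 * M32) (P3 * M33)"
    unfolding blk3_diag_shape(1)[OF P] blk3_mult[OF blk3_diag_shape(2)[OF P] M]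
    using P dims by (simp add: zero_mat_dim_simps)
  have "blk3_shape (P1 * M11) (P1 * M12) (P1 * M13) (P2 * M21) (P2 * M22) (P2 * M23)
      (P3 * M31) (P3 * M32) (P3 * M33) n1 n2 n3"
    unfolding blk3_shape_def carrier_mat_def using P dims by simp
  then show ?thesis
    unfolding PM blk3_diag_shape(1)[OF Q] using Q dims
    by (subst blk3_mult[OF _ blk3_diag_shape(2)[OF Q]]) (simp_all add: zero_mat_dim_simps)
qed

section \<open>The matrix inequality for W~\<close>

lemma Ds_eq_blk3_diag: "Ds n m = blk3_diag (1\<^sub>m n) (1\<^sub>m n) (complex_of_real (1 / sqrt 2) \<cdot>\<^sub>m 1\<^sub>m m)"
  unfolding Ds_def blk3_diag_def by simp

lemma diagXX2_eq_blk3_diag: "X \<in> carrier_mat n n \<Longrightarrow> diagXX2 X m = blk3_diag X X (2 \<cdot>\<^sub>m 1\<^sub>m m)"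
  unfolding diagXX2_def blk3_diag_def by simp

lemma Wtilde_shape:
  assumes "X \<in> carrier_mat n n" "A \<in> carrier_mat n n" "B \<in> carrier_mat n m"
    "C \<in> carrier_mat m n" "D \<in> carrier_mat m m"
  shows "blk3_shape X (X * A) (X * B) (adj A * X) X (adj C) (adj B * X) C (adj D + D) n n m"
  using assms by auto

lemma Wtilde_carrier:
  assumes "X \<in> carrier_mat n n" "A \<in> carrier_mat n n" "B \<in> carrier_mat n m"
    "C \<in> carrier_mat m n" "D \<in> carrier_mat m m"
  shows "Wtilde X A B C D \<in> carrier_mat (n + n + m) (n + n + m)"
  unfolding Wtilde_def using assms by auto

lemma Wtilde_state_transformation:
  assumes A: "A \<in> carrier_mat n n" and B: "B \<in> carrier_mat n m" and C: "C \<in> carrier_mat m n"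
    and D: "D \<in> carrier_mat m m" and T: "T \<in> carrier_mat n n" and Ti: "Ti \<in> carrier_mat n n"
    and TiT: "Ti * T = 1\<^sub>m n"
  defines "S \<equiv> blk3_diag T T (1\<^sub>m m)"
  shows "adj S * Wtilde (1\<^sub>m n) (T * A * Ti) (T * B) (C * Ti) D * S = Wtilde (adj T * T) A B C D"
proof -
  have TA: "T * A * Ti \<in> carrier_mat n n" and TB: "T * B \<in> carrier_mat n m" and CT: "C * Ti \<in> carrier_mat m n"
    using A B C T Ti by auto
  have adj_TiT: "adj T * adj Ti = 1\<^sub>m n"
    using TiT T Ti by (metis adj_mult adj_one)
  have adj_TiT_right: "adj T * (adj Ti * R) = R" if "R \<in> carrier_mat n k" for R k
    using that T Ti adj_TiT by (simp add: assoc_mult_mat[of "adj T" n n "adj Ti" n R k, symmetric])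
  have "adj S * Wtilde (1\<^sub>m n) (T * A * Ti) (T * B) (C * Ti) D * S
    = blk3 (adj T * 1\<^sub>m n * T) (adj T * (1\<^sub>m n * (T * A * Ti)) * T) (adj T * (1\<^sub>m n * (T * B)) * 1\<^sub>m m)
        (adj T * (adj (T * A * Ti) * 1\<^sub>m n) * T) (adj T * 1\<^sub>m n * T) (adj T * adj (C * Ti) * 1\<^sub>m m)
        (1\<^sub>m m * (adj (T * B) * 1\<^sub>m n) * T) (1\<^sub>m m * (C * Ti) * T) (1\<^sub>m m * (adj D + D) * 1\<^sub>m m)"
    unfolding S_def adj_blk3_diag[OF T T one_carrier_mat] adj_one Wtilde_def
    by (rule blk3_diag_congruence[OF Wtilde_shape[OF one_carrier_mat TA TB CT D]]) (use T in auto)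
  also have "\<dots> = Wtilde (adj T * T) A B C D"
  proof -
    have "adj T * (1\<^sub>m n * (T * A * Ti)) * T = adj T * T * A"
      using A T Ti by (simp add: assoc_mult_mat[of _ n n _ n _ n] TiT)
    moreover have "adj T * (1\<^sub>m n * (T * B)) * 1\<^sub>m m = adj T * T * B"
      using B T by (simp add: assoc_mult_mat[of _ n n _ n _ m])
    moreover have "adj T * (adj (T * A * Ti) * 1\<^sub>m n) * T = adj A * (adj T * T)"
      using A T Ti
      by (simp add: adj_mult[of _ n n _ n] assoc_mult_mat[of _ n n _ n _ n]
          adj_TiT_right[of "adj A * (adj T * T)" n])
    moreover have "adj T * adj (C * Ti) * 1\<^sub>m m = adj C"
      using C Ti T by (simp add: adj_mult[of _ m n _ n] assoc_mult_mat[of _ n n _ n _ m] adj_TiT_right[of "adj C" m])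
    moreover have "1\<^sub>m m * (adj (T * B) * 1\<^sub>m n) * T = adj B * (adj T * T)"
      using B T by (simp add: adj_mult[of _ n n _ m] assoc_mult_mat[of _ m n _ n _ n])
    moreover have "1\<^sub>m m * (C * Ti) * T = C"
      using C T Ti by (simp add: assoc_mult_mat[of _ m n _ n _ n] TiT)
    ultimately show ?thesis unfolding Wtilde_def using T D by simp
  qed
  finally show ?thesis .
qed

lemma adj_Wtilde:
  assumes X: "X \<in> carrier_mat n n" "adj X = X" and A: "A \<in> carrier_mat n n" and B: "B \<in> carrier_mat n m"
    and C: "C \<in> carrier_mat m n" and D: "D \<in> carrier_mat m m"
  shows "adj (Wtilde X A B C D) = Wtilde X A B C D"
proof -
  have "adj (adj D + D) = adj D + D" using D by (simp add: adj_add[of _ m m] comm_add_mat[of _ m m])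
  then show ?thesis
    unfolding Wtilde_def adj_blk3[OF Wtilde_shape[OF X(1) A B C D]] using X A B C D
    by (simp add: adj_mult[of _ n n _ n] adj_mult[of _ m n _ n] adj_mult[of _ n n _ m])
qed

lemma congruence_minus_smult:
  assumes S: "S \<in> carrier_mat n n" and P: "P \<in> carrier_mat n n" and R: "R \<in> carrier_mat n n"
  shows "adj S * (P - c \<cdot>\<^sub>m R) * S = adj S * P * S - c \<cdot>\<^sub>m (adj S * R * S)"
  using S P R
  by (simp add: mult_minus_distrib_mat[of _ n n] minus_mult_distrib_mat[of _ n n]
      mult_smult_distrib[of _ n n] mult_smult_assoc_mat[of _ n n])

lemma Ds_mult_blk3_diag_sqrt2:
  assumes T: "T \<in> carrier_mat n n"
  shows "Ds n m * blk3_diag T T (complex_of_real (sqrt 2) \<cdot>\<^sub>m 1\<^sub>m m) = blk3_diag T T (1\<^sub>m m)"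
proof -
  have "complex_of_real (1 / sqrt 2) * complex_of_real (sqrt 2) = 1" by (simp flip: of_real_mult)
  moreover have "Ds n m * blk3_diag T T (complex_of_real (sqrt 2) \<cdot>\<^sub>m 1\<^sub>m m) = blk3_diag (1\<^sub>m n * T) (1\<^sub>m n * T)
      ((complex_of_real (1 / sqrt 2) \<cdot>\<^sub>m 1\<^sub>m m) * (complex_of_real (sqrt 2) \<cdot>\<^sub>m 1\<^sub>m m))"
    unfolding Ds_eq_blk3_diag by (rule blk3_diag_mult) (use T in auto)
  ultimately show ?thesis
    using T by (simp add: smult_one_mult_mat[of _ m m] smult_smult_mat del: of_real_divide)
qed

lemma Wtilde_congruence_Ds:
  assumes A: "A \<in> carrier_mat n n" and B: "B \<in> carrier_mat n m"
    and C: "C \<in> carrier_mat m n" and D: "D \<in> carrier_mat m m"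
    and T: "T \<in> carrier_mat n n" "det T \<noteq> 0"
  defines "R \<equiv> blk3_diag T T (complex_of_real (sqrt 2) \<cdot>\<^sub>m 1\<^sub>m m)"
  shows "adj R * (Ds n m * Wtilde (1\<^sub>m n) (T * A * minv T) (T * B) (C * minv T) D * Ds n m) * R
      = Wtilde (adj T * T) A B C D"
    and "adj R * R = diagXX2 (adj T * T) m"
    and "R * blk3_diag (minv T) (minv T) (complex_of_real (1 / sqrt 2) \<cdot>\<^sub>m 1\<^sub>m m) = 1\<^sub>m (n + n + m)"
proof -
  note Ti = det_nonzero_minv[OF T]
  define N where "N = n + n + m"
  define W where "W = Wtilde (1\<^sub>m n) (T * A * minv T) (T * B) (C * minv T) D"
  define r where "r = complex_of_real (sqrt 2)"
  define d where "d = complex_of_real (1 / sqrt 2)"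
  have r: "d * r = 1" "cnj r * r = 2" unfolding r_def d_def by (simp_all flip: of_real_mult)
  have W: "W \<in> carrier_mat N N"
    unfolding W_def N_def using A B C D T Ti by (auto intro!: Wtilde_carrier)
  have Ds: "Ds n m \<in> carrier_mat N N" "adj (Ds n m) = Ds n m"
    unfolding Ds_eq_blk3_diag N_def
    by (auto simp: adj_blk3_diag[of "1\<^sub>m n" n "1\<^sub>m n" n _ m] adj_smult simp del: of_real_divide)
  have R: "R \<in> carrier_mat N N" unfolding R_def N_def using T by auto
  have DsR: "Ds n m * R = blk3_diag T T (1\<^sub>m m)"
    unfolding R_def by (rule Ds_mult_blk3_diag_sqrt2[OF T(1)])
  have "adj R * (Ds n m * W * Ds n m) * R = adj (Ds n m * R) * W * (Ds n m * R)"
    using Ds W R by (simp add: adj_mult[of _ N N _ N] assoc_mult_mat[of _ N N _ N _ N])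
  also have "\<dots> = Wtilde (adj T * T) A B C D"
    unfolding DsR W_def by (rule Wtilde_state_transformation) (use A B C D T Ti in auto)
  finally show "adj R * (Ds n m * Wtilde (1\<^sub>m n) (T * A * minv T) (T * B) (C * minv T) D * Ds n m) * R
      = Wtilde (adj T * T) A B C D"
    unfolding W_def .
  have "adj R * R = blk3_diag (adj T * T) (adj T * T) ((cnj r \<cdot>\<^sub>m 1\<^sub>m m) * (r \<cdot>\<^sub>m 1\<^sub>m m))"
    unfolding R_def r_def adj_blk3_diag[OF T(1) T(1) smult_carrier_mat[OF one_carrier_mat]] adj_smult adj_one
    by (rule blk3_diag_mult) (use T in auto)
  also have "\<dots> = diagXX2 (adj T * T) m"
    unfolding diagXX2_eq_blk3_diag[OF mult_square_carrier_mat[OF adj_carrier[OF T(1)] T(1)]]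
    using r by (simp add: smult_one_mult_mat[of _ m m] smult_smult_mat)
  finally show "adj R * R = diagXX2 (adj T * T) m" .
  have "R * blk3_diag (minv T) (minv T) (d \<cdot>\<^sub>m 1\<^sub>m m)
      = blk3_diag (T * minv T) (T * minv T) ((r \<cdot>\<^sub>m 1\<^sub>m m) * (d \<cdot>\<^sub>m 1\<^sub>m m))"
    unfolding R_def r_def by (rule blk3_diag_mult) (use T Ti in auto)
  also have "\<dots> = 1\<^sub>m (n + n + m)"
    using Ti r by (simp add: smult_one_mult_mat[of _ m m] smult_smult_mat mult.commute[of r] blk3_diag_one)
  finally show "R * blk3_diag (minv T) (minv T) (complex_of_real (1 / sqrt 2) \<cdot>\<^sub>m 1\<^sub>m m) = 1\<^sub>m (n + n + m)"
    unfolding d_def .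
qed

lemma xi_set_iff_le_lambda_min:
  assumes n: "0 < n" and A: "A \<in> carrier_mat n n" and B: "B \<in> carrier_mat n m"
    and C: "C \<in> carrier_mat m n" and D: "D \<in> carrier_mat m m"
    and T: "T \<in> carrier_mat n n" "det T \<noteq> 0" and X: "X = adj T * T"
  shows "\<xi> \<in> xi_set X A B C D \<longleftrightarrow>
    \<xi> \<le> lambda_min (Ds n m * Wtilde (1\<^sub>m n) (T * A * minv T) (T * B) (C * minv T) D * Ds n m)"
proof -
  note Ti = det_nonzero_minv[OF T]
  define N where "N = n + n + m"
  define M where "M = Ds n m * Wtilde (1\<^sub>m n) (T * A * minv T) (T * B) (C * minv T) D * Ds n m"
  define R where "R = blk3_diag T T (complex_of_real (sqrt 2) \<cdot>\<^sub>m 1\<^sub>m m)"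
  note congruence = Wtilde_congruence_Ds[OF A B C D T, folded R_def M_def X N_def]
  have M: "M \<in> carrier_mat N N" "adj M = M"
  proof -
    have "Ds n m \<in> carrier_mat N N" "adj (Ds n m) = Ds n m"
      unfolding Ds_eq_blk3_diag N_def
      by (auto simp: adj_blk3_diag[of "1\<^sub>m n" n "1\<^sub>m n" n _ m] adj_smult simp del: of_real_divide)
    moreover have "Wtilde (1\<^sub>m n) (T * A * minv T) (T * B) (C * minv T) D \<in> carrier_mat N N"
      "adj (Wtilde (1\<^sub>m n) (T * A * minv T) (T * B) (C * minv T) D)
        = Wtilde (1\<^sub>m n) (T * A * minv T) (T * B) (C * minv T) D"
      unfolding N_def using A B C D T Ti by (auto intro!: Wtilde_carrier adj_Wtilde)
    ultimately show "M \<in> carrier_mat N N" "adj M = M"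
      unfolding M_def by (auto simp: adj_mult[of _ N N _ N] assoc_mult_mat[of _ N N _ N _ N])
  qed
  have R: "R \<in> carrier_mat N N" unfolding R_def N_def using T by auto
  have "\<xi> \<in> xi_set X A B C D \<longleftrightarrow> psd (adj R * (M - complex_of_real \<xi> \<cdot>\<^sub>m 1\<^sub>m N) * R)"
    unfolding xi_set_def loewner_ge_def congruence_minus_smult[OF R M(1) one_carrier_mat] congruence(1)
    using R D congruence(2) by simp
  also have "\<dots> \<longleftrightarrow> psd (M - complex_of_real \<xi> \<cdot>\<^sub>m 1\<^sub>m N)"
    by (rule psd_congruence_iff[OF _ R _ congruence(3)]) (use M Ti in \<open>auto simp: minus_carrier_mat N_def\<close>)
  also have "\<dots> \<longleftrightarrow> \<xi> \<le> lambda_min M"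
    by (rule psd_shift_iff_le_lambda_min[OF M]) (use n in \<open>simp add: N_def\<close>)
  finally show ?thesis unfolding M_def .
qed

lemma not_minimal_sys_zero:
  assumes "0 < n" "A = 0\<^sub>m n n" "B = 0\<^sub>m n m"
  shows "\<not> minimal_sys A B C D"
proof
  assume "minimal_sys A B C D"
  then have "vec_space.rank n (hcat (0 \<cdot>\<^sub>m 1\<^sub>m n - A) B) = n"
    unfolding minimal_sys_def using assms by auto
  moreover have "hcat (0 \<cdot>\<^sub>m 1\<^sub>m n - A) B = 0\<^sub>m n (n + m)"
    unfolding assms hcat_def by (rule eq_matI) auto
  moreover have "vec_space.rank n (0\<^sub>m n (n + m) :: complex mat) = 0"
    by (rule vec_space.rank_0I)
  ultimately show False using assms by simp
qed

lemma Wtilde_ge_diagXX2_imp_blocks_zero: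
  assumes A: "A \<in> carrier_mat n n" and B: "B \<in> carrier_mat n m"
    and C: "C \<in> carrier_mat m n" and D: "D \<in> carrier_mat m m" and X: "X \<in> carrier_mat n n"
    and ge: "loewner_ge (Wtilde X A B C D) (diagXX2 X m)"
  shows "X * A = 0\<^sub>m n n" "X * B = 0\<^sub>m n m"
proof -
  define P where "P = Wtilde X A B C D - diagXX2 X m"
  have psd: "psd P" using ge unfolding P_def loewner_ge_def .
  have P: "P \<in> carrier_mat (n + n + m) (n + n + m)"
    unfolding P_def diagXX2_eq_blk3_diag[OF X] using X by (simp add: minus_carrier_mat)
  note diag_shape = blk3_diag_shape[OF X X smult_carrier_mat[OF one_carrier_mat[of m]]]
  have P_index: "P $$ (i, j) = blk3 X (X * A) (X * B) (adj A * X) X (adj C) (adj B * X) C (adj D + D) $$ (i, j)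
      - blk3 X (0\<^sub>m n n) (0\<^sub>m n m) (0\<^sub>m n n) X (0\<^sub>m n m) (0\<^sub>m m n) (0\<^sub>m m n) (2 \<cdot>\<^sub>m 1\<^sub>m m) $$ (i, j)"
    if "i < n + n + m" "j < n + n + m" for i j
    unfolding P_def Wtilde_def diagXX2_eq_blk3_diag[OF X] diag_shape(1)
    using that X by simp
  have row_0: "P $$ (i, j) = 0" if "i < n" "j < n + n + m" for i j
  proof (rule psd_diag_eq_0_imp_row_0[OF psd P])
    show "P $$ (i, i) = 0"
      using that X 
      by (simp add: P_index blk3_index[OF diag_shape(2)]
          blk3_index[OF Wtilde_shape[OF X A B C D]])
  qed (use that in auto)
  show "X * A = 0\<^sub>m n n"
  proof (rule eq_matI)
    fix i j assume "i < dim_row (0\<^sub>m n n :: complex mat)" "j < dim_col (0\<^sub>m n n :: complex mat)"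
    then have "i < n" "j < n" by auto
    then show "(X * A) $$ (i, j) = 0\<^sub>m n n $$ (i, j)"
      using row_0[of i "n + j"] X A 
      by (simp add: P_index blk3_index[OF diag_shape(2)]
          blk3_index[OF Wtilde_shape[OF X A B C D]])
  qed (use X A in auto)
  show "X * B = 0\<^sub>m n m"
  proof (rule eq_matI)
    fix i j assume "i < dim_row (0\<^sub>m n m :: complex mat)" "j < dim_col (0\<^sub>m n m :: complex mat)"
    then have "i < n" "j < m" by auto
    then show "(X * B) $$ (i, j) = 0\<^sub>m n m $$ (i, j)"
      using row_0[of i "n + n + j"] X B 
      by (simp add: P_index blk3_index[OF diag_shape(2)]
          blk3_index[OF Wtilde_shape[OF X A B C D]])
  qed (use X B in auto)
qed

lemma Wtilde_not_ge_diagXX2: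
  assumes n: "0 < n" and A: "A \<in> carrier_mat n n" and B: "B \<in> carrier_mat n m"
    and C: "C \<in> carrier_mat m n" and D: "D \<in> carrier_mat m m"
    and min: "minimal_sys A B C D" and X: "X \<in> carrier_mat n n" "pd X"
  shows "\<not> loewner_ge (Wtilde X A B C D) (diagXX2 X m)"
proof
  assume "loewner_ge (Wtilde X A B C D) (diagXX2 X m)"
  note blocks_zero = Wtilde_ge_diagXX2_imp_blocks_zero[OF A B C D X(1) this]
  note Xi = det_nonzero_minv[OF X(1) pd_imp_det_nonzero[OF X(2,1)]]
  have "A = minv X * (X * A)" "B = minv X * (X * B)"
    using A B X(1) Xi
    by (simp_all add: assoc_mult_mat[of "minv X" n n X n A n, symmetric]
        assoc_mult_mat[of "minv X" n n X n B m, symmetric])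
  then have "A = 0\<^sub>m n n" "B = 0\<^sub>m n m" unfolding blocks_zero using Xi by simp_all
  then show False using not_minimal_sys_zero[OF n] min by blast
qed

theorem theorem5p1:
  fixes n m :: nat and A B C D X :: "complex mat"
  assumes "0 < n"
    and "A \<in> carrier_mat n n" and "B \<in> carrier_mat n m"
    and "C \<in> carrier_mat m n" and "D \<in> carrier_mat m m"
    and "minimal_sys A B C D" and "passive_sys A B C D"
    and "X \<in> Xpos A B C D"
  shows "(\<exists>!\<xi>s. \<xi>s \<in> xi_set X A B C D \<and> (\<forall>\<xi> \<in> xi_set X A B C D. \<xi> \<le> \<xi>s)) \<and>
         (\<forall>\<xi>s. \<xi>s \<in> xi_set X A B C D \<and> (\<forall>\<xi> \<in> xi_set X A B C D. \<xi> \<le> \<xi>s) \<longrightarrow>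
            \<xi>s < 1 \<and>
            (\<forall>T. T \<in> carrier_mat n n \<and> invertible_mat T \<and> X = adj T * T \<longrightarrow>
               \<xi>s = lambda_min (Ds n m *
                        Wtilde (1\<^sub>m n) (T * A * minv T) (T * B) (C * minv T) D * Ds n m)))"
proof -
  note dims = assms(2-5) and min = assms(6)
  have X: "X \<in> carrier_mat n n" "pd X" using assms(2,8) unfolding Xpos_def by auto
  obtain T0 where T0: "T0 \<in> carrier_mat n n" "det T0 \<noteq> 0" "X = adj T0 * T0"
    using cholesky_factorization[OF X] by blast
  define \<xi>0 where "\<xi>0 = lambda_min (Ds n m * Wtilde (1\<^sub>m n) (T0 * A * minv T0) (T0 * B) (C * minv T0) D * Ds n m)"
  have xi_set: "\<xi> \<in> xi_set X A B C D \<longleftrightarrow> \<xi> \<le> \<xi>0" for \<xi>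
    unfolding \<xi>0_def using xi_set_iff_le_lambda_min[OF assms(1) dims T0] .
  have greatest: "\<xi>s \<in> xi_set X A B C D \<and> (\<forall>\<xi> \<in> xi_set X A B C D. \<xi> \<le> \<xi>s) \<longleftrightarrow> \<xi>s = \<xi>0" for \<xi>s
    unfolding Ball_def xi_set by (auto intro: order_antisym)
  have "\<xi>0 < 1"
  proof (rule ccontr)
    assume "\<not> \<xi>0 < 1"
    then have "loewner_ge (Wtilde X A B C D) (diagXX2 X m)"
      using xi_set[of 1] assms(5) unfolding xi_set_def by simp
    then show False using Wtilde_not_ge_diagXX2[OF assms(1) dims min X] by blast
  qed
  moreover have "\<xi>0 = lambda_min (Ds n m * Wtilde (1\<^sub>m n) (T * A * minv T) (T * B) (C * minv T) D * Ds n m)"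
    if "T \<in> carrier_mat n n" "invertible_mat T" "X = adj T * T" for T
    using xi_set xi_set_iff_le_lambda_min[OF assms(1) dims that(1) invertible_mat_det_nonzero[OF that(1,2)] that(3)]
    by (meson order_antisym order_refl)
  ultimately show ?thesis using greatest by auto
qed

end
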